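(* Let $\alpha\in(0,1]$ and let $(X,\|\cdot\|)$ be a Banach space whose norm $\|\cdot\|$ is differentiable with modulus of smoothness of power type $1+\alpha$. Let $X^*$ be the dual space with dual norm $\|\cdot\|_*$ and dual unit sphere $S^*$. Let $C\subseteq X$ and let $D:C\to S^*$ be a mapping. The following are equivalent: (1) There exists a $C^{1,\alpha}$ convex body $V$ such that $C\subseteq\partial V$ and, for every $x\in C$, the hyperplane $H_x:=\{y\in X: D(x)(y)=D(x)(x)\}$ is tangent to $\partial V$ at $x$ and $V\subseteq H_x^-:=\{y\in X: D(x)(y)\le D(x)(x)\}$. (2) There exists $\delta>0$ such that $$D(y)(y-x)\ge\delta\|D(x)-D(y)\|_*^{1+\frac1\alpha}\quad\text{for all }x,y\in C.$$ Moreover, if $C$ is bounded, then $V$ can be taken to be bounded as well.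
   Context: The modulus of smoothness of $\|\cdot\|$ is $\rho(t)=\sup\{\tfrac{\|x+th\|+\|x-th\|}{2}-1:\|x\|=\|h\|=1\}$; it is of power type $1+\alpha$ if $\rho(t)\le Kt^{1+\alpha}$ for some $K>0$ and all $t>0$ (such spaces are superreflexive). A convex body is a closed convex set with nonempty interior (possibly unbounded). A function $F:X\to\mathbb{R}$ is of class $C^{1,\alpha}$ if it is Fréchet differentiable and $\|DF(x)-DF(y)\|_*\le K\|x-y\|^\alpha$ for some $K>0$. A convex body $V$ is of class $C^{1,\alpha}$ if there exist $M>0$ and a convex $F\in C^{1,\alpha}(X)$ with $\partial V=F^{-1}(1)$ and $M^{-1}\le\|DF(x)\|_*\le M$ for all $x\in\partial V$. *)

theory Defs
  imports "HOL-Analysis.Analysis"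
begin

(* Dual space X* is represented by bounded linear functionals 'a <Rightarrow><^sub>L real,
  with the operator norm as the dual norm. *)

(* Power type 1+alpha: rho(t) <le> K t^(1+alpha), i.e. every quantity under the sup is
  bounded by K t^(1+alpha) (stated pointwise so that it is meaningful also when the
  unit sphere is empty). *)
definition smoothness_power_type :: "real \<Rightarrow> 'a::real_normed_vector itself \<Rightarrow> bool" where
  "smoothness_power_type \<alpha> (_::'a itself) \<longleftrightarrow>
     (\<exists>K>0. \<forall>t>0. \<forall>x h::'a. norm x = 1 \<and> norm h = 1 \<longrightarrow>
        (norm (x + t *\<^sub>R h) + norm (x - t *\<^sub>R h)) / 2 - 1 \<le> K * t powr (1 + \<alpha>))"

definition convex_body :: "'a::real_normed_vector set \<Rightarrow> bool" where
  "convex_body V \<longleftrightarrow> closed V \<and> convex V \<and> interior V \<noteq> {}"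

definition C1_alpha_with :: "real \<Rightarrow> ('a::real_normed_vector \<Rightarrow> real) \<Rightarrow> ('a \<Rightarrow> ('a \<Rightarrow>\<^sub>L real)) \<Rightarrow> bool" where
  "C1_alpha_with \<alpha> F DF \<longleftrightarrow>
     (\<forall>x. (F has_derivative blinfun_apply (DF x)) (at x)) \<and>
     (\<exists>K>0. \<forall>x y. norm (DF x - DF y) \<le> K * norm (x - y) powr \<alpha>)"

definition C1_alpha_body :: "real \<Rightarrow> 'a::real_normed_vector set \<Rightarrow> bool" where
  "C1_alpha_body \<alpha> V \<longleftrightarrow> convex_body V \<and>
     (\<exists>M>0. \<exists>F DF. convex_on UNIV F \<and> C1_alpha_with \<alpha> F DF \<and>
        frontier V = F -` {1} \<and>
        (\<forall>x\<in>frontier V. 1 / M \<le> norm (DF x) \<and> norm (DF x) \<le> M))"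

definition tangent_at :: "'a::real_normed_vector set \<Rightarrow> 'a set \<Rightarrow> 'a \<Rightarrow> bool" where
  "tangent_at H S x \<longleftrightarrow> x \<in> S \<and> x \<in> H \<and>
     ((\<lambda>y. infdist y H / norm (y - x)) \<longlongrightarrow> 0) (at x within S)"

definition hyperplane_at :: "('a \<Rightarrow> ('a::real_normed_vector \<Rightarrow>\<^sub>L real)) \<Rightarrow> 'a \<Rightarrow> 'a set" where
  "hyperplane_at D x = {y. D x y = D x x}"

definition halfspace_at :: "('a \<Rightarrow> ('a::real_normed_vector \<Rightarrow>\<^sub>L real)) \<Rightarrow> 'a \<Rightarrow> 'a set" where
  "halfspace_at D x = {y. D x y \<le> D x x}"

definition supporting_body :: "real \<Rightarrow> 'a::real_normed_vector set \<Rightarrow> ('a \<Rightarrow> ('a \<Rightarrow>\<^sub>L real)) \<Rightarrow> 'a set \<Rightarrow> bool" where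
  "supporting_body \<alpha> C D V \<longleftrightarrow> C1_alpha_body \<alpha> V \<and> C \<subseteq> frontier V \<and>
     (\<forall>x\<in>C. tangent_at (hyperplane_at D x) (frontier V) x \<and> V \<subseteq> halfspace_at D x)"

end

theory Submission
  imports Defs
begin

(*
  Sufficiency.  For psi = norm powr (1 + alpha), the power-type modulus of smoothness gives the
  one-sided bound psi (u + h) + psi (u - h) - 2 psi u <= c * norm h powr (1 + alpha).  By Young's
  inequality, condition (2) puts every affine function D x (z - x) below every cap
  D y (z - y) + M psi (z - y) with y in C.  The convex envelope F of the infimum of the caps is
  squeezed between the two, hence vanishes on C with derivative D there, and it inherits the
  second-difference bound; a convex function with such a bound is C^{1,alpha}.  The body is
  V = {F <= 0}: pushing nearby points of C inwards produces points with F < 0 at bounded distance,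
  which keeps DF away from 0 on the frontier and V close to the convex hull of C.

  Necessity.  Tangency of the hyperplanes forces ker DF x <= ker D x, so D x = sgn (DF x) or
  D x = - sgn (DF x), with the same sign for all x.  A convex C^{1,alpha} function satisfies
  F y >= F x + DF x (y - x) + c * norm (DF y - DF x) powr (1 + 1 / alpha), which for F = 1 on C
  is condition (2).
*)

section \<open>Elementary inequalities\<close>

lemma tendsto_mult_powr_at_right_0:
  fixes K \<alpha> :: real
  assumes "0 < \<alpha>"
  shows "((\<lambda>t. K * t powr \<alpha>) \<longlongrightarrow> 0) (at_right 0)"
proof -
  have "((\<lambda>t::real. t powr \<alpha>) \<longlongrightarrow> 0) (at_right 0)"
    using assms by (intro tendsto_zero_powrI tendsto_ident_at)
      (auto simp: eventually_at_right_field intro: exI[of _ 1])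
  thus ?thesis by (rule tendsto_mult_right_zero)
qed

lemma nonpos_if_le_mult_powr:
  fixes a K \<alpha> :: real
  assumes "0 < \<alpha>" and "\<And>t. 0 < t \<Longrightarrow> t \<le> 1 \<Longrightarrow> a \<le> K * t powr \<alpha>"
  shows "a \<le> 0"
proof (rule tendsto_lowerbound[OF tendsto_mult_powr_at_right_0[OF assms(1)]])
  show "\<forall>\<^sub>F t in at_right 0. a \<le> K * t powr \<alpha>"
    using assms(2) by (auto simp: eventually_at_right_field intro: exI[of _ 1])
qed simp

lemma powr_le_1_iff:
  fixes x p :: real
  assumes "0 \<le> x" "0 < p"
  shows "x powr p \<le> 1 \<longleftrightarrow> x \<le> 1"
  using powr_le1[of p x] gr_one_powr[of x p] assms by (smt (verit))

lemma powr_eq_1_iff: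
  fixes x p :: real
  assumes "0 \<le> x" "0 < p"
  shows "x powr p = 1 \<longleftrightarrow> x = 1"
  using powr_less_mono2[of p x 1] powr_less_mono2[of p 1 x] assms
  by (cases x "1::real" rule: linorder_cases) auto

lemma powr_subadditive:
  fixes x y \<alpha> :: real
  assumes "0 \<le> x" "0 \<le> y" "0 < \<alpha>" "\<alpha> \<le> 1"
  shows "(x + y) powr \<alpha> \<le> x powr \<alpha> + y powr \<alpha>"
proof (cases "x + y = 0")
  case True thus ?thesis using assms by simp
next
  case False
  hence xy: "x + y > 0" using assms by simp
  define s where "s = x / (x + y)"
  have s: "0 \<le> s" "s \<le> 1" using assms xy by (auto simp: s_def)
  have xs: "(x + y) * s = x" and ys: "(x + y) * (1 - s) = y"
    using xy by (simp_all add: s_def field_simps)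
  have "s \<le> s powr \<alpha>" "1 - s \<le> (1 - s) powr \<alpha>"
    using powr_mono'[of \<alpha> 1 s] powr_mono'[of \<alpha> 1 "1 - s"] s assms by simp_all
  hence "(x + y) powr \<alpha> * 1 \<le> (x + y) powr \<alpha> * (s powr \<alpha> + (1 - s) powr \<alpha>)"
    by (intro mult_left_mono) auto
  also have "\<dots> = ((x + y) * s) powr \<alpha> + ((x + y) * (1 - s)) powr \<alpha>"
    using s xy by (simp add: powr_mult distrib_left)
  finally show ?thesis unfolding xs ys by simp
qed

lemma abs_powr_diff_le:
  fixes a c \<alpha> :: real
  assumes "0 \<le> a" "0 \<le> c" "0 < \<alpha>" "\<alpha> \<le> 1"
  shows "\<bar>a powr \<alpha> - c powr \<alpha>\<bar> \<le> \<bar>a - c\<bar> powr \<alpha>"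
proof -
  have *: "\<bar>y powr \<alpha> - x powr \<alpha>\<bar> \<le> \<bar>y - x\<bar> powr \<alpha>" if "0 \<le> x" "x \<le> y" for x y :: real
    using powr_subadditive[of x "y - x" \<alpha>] powr_mono2[of \<alpha> x y] that assms by simp
  show ?thesis
    using *[of c a] *[of a c] assms by (cases "c \<le> a") (auto simp: abs_minus_commute)
qed

lemma powr_above_tangent:
  fixes x y p :: real
  assumes "0 \<le> x" "0 \<le> y" "1 \<le> p"
  shows "y powr p + p * y powr (p - 1) * (x - y) \<le> x powr p"
proof (cases "y = 0")
  case False
  hence y: "y > 0" using assms by simp
  show ?thesis
  proof (cases "x = 0")
    case True
    have "y powr p + p * y powr (p - 1) * (x - y) = - ((p - 1) * (y * y powr (p - 1)))"
      using True y by (simp add: powr_mult_base algebra_simps)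
    also have "\<dots> \<le> 0" using assms y by simp
    finally show ?thesis using True by simp
  next
    case False
    hence "x > 0" using assms by simp
    have "p * y powr (p - 1) * (x - y) \<le> x powr p - y powr p"
      by (rule convex_on_imp_above_tangent[OF powr_convex[OF assms(3)]])
        (use \<open>x > 0\<close> y in
          \<open>auto intro!: DERIV_subset[OF has_real_derivative_powr] simp: interior_open\<close>)
    thus ?thesis by simp
  qed
qed (use assms in simp)

lemma powr_convex_combination_le:
  fixes a b t p :: real
  assumes "0 \<le> a" "0 \<le> b" "0 \<le> t" "t \<le> 1" "1 \<le> p"
  shows "((1 - t) * a + t * b) powr p \<le> (1 - t) * a powr p + t * b powr p"
proof -
  define z where "z = (1 - t) * a + t * b"
  have "z \<ge> 0" using assms by (simp add: z_def)
  hence "(1 - t) * (z powr p + p * z powr (p - 1) * (a - z))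
    + t * (z powr p + p * z powr (p - 1) * (b - z))
     \<le> (1 - t) * a powr p + t * b powr p"
    using assms by (intro add_mono mult_left_mono powr_above_tangent) auto
  moreover have "(1 - t) * (z powr p + p * z powr (p - 1) * (a - z))
    + t * (z powr p + p * z powr (p - 1) * (b - z))
     = z powr p"
    by (simp add: z_def algebra_simps)
  ultimately show ?thesis by (simp add: z_def)
qed

lemma powr_second_difference_le:
  fixes a b c \<eta> E \<alpha> :: real
  assumes "0 \<le> a" "0 \<le> b" "0 < c" "\<bar>a - c\<bar> \<le> \<eta>" "\<bar>b - c\<bar> \<le> \<eta>" "a + b - 2 * c \<le> E"
    and "0 < \<alpha>" "\<alpha> \<le> 1"
  shows "a powr (1 + \<alpha>) + b powr (1 + \<alpha>) - 2 * c powr (1 + \<alpha>)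
     \<le> (1 + \<alpha>) * c powr \<alpha> * E + 2 * (1 + \<alpha>) * \<eta> powr (1 + \<alpha>)"
proof -
  let ?p = "1 + \<alpha>"
  have one: "x powr ?p - c powr ?p \<le> ?p * c powr \<alpha> * (x - c) + ?p * \<eta> powr ?p"
    if x: "0 \<le> x" "\<bar>x - c\<bar> \<le> \<eta>" for x
  proof -
    have tangent: "x powr ?p + ?p * x powr \<alpha> * (c - x) \<le> c powr ?p"
      using powr_above_tangent[of c x ?p] x assms by simp
    have "(x powr \<alpha> - c powr \<alpha>) * (x - c) \<le> \<bar>x powr \<alpha> - c powr \<alpha>\<bar> * \<bar>x - c\<bar>"
      by (metis abs_ge_self abs_mult)
    also have "\<dots> \<le> \<eta> powr \<alpha> * \<eta>"
      using x assms by (intro mult_mono order_trans[OF abs_powr_diff_le powr_mono2]) auto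
    also have "\<dots> = \<eta> powr ?p" using x by (simp add: powr_add)
    finally have "?p * ((x powr \<alpha> - c powr \<alpha>) * (x - c)) \<le> ?p * \<eta> powr ?p"
      using assms by (intro mult_left_mono) auto
    thus ?thesis using tangent by (simp add: algebra_simps)
  qed
  have "a powr ?p - c powr ?p + (b powr ?p - c powr ?p) \<le> ?p * c powr \<alpha> * (a + b - 2 * c)
    + 2 * ?p * \<eta> powr ?p"
    using one[of a] one[of b] assms by (simp add: algebra_simps)
  also have "?p * c powr \<alpha> * (a + b - 2 * c) \<le> ?p * c powr \<alpha> * E"
    using assms by (intro mult_left_mono) auto
  finally show ?thesis by simp
qed

lemma young_powr:
  fixes s r \<delta> \<alpha> :: real
  assumes "0 \<le> s" "0 \<le> r" "0 < \<delta>" "0 < \<alpha>"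
  shows "s * r - \<delta> * s powr (1 + 1 / \<alpha>) \<le> \<delta> powr (- \<alpha>) * r powr (1 + \<alpha>)"
proof (cases "r \<le> \<delta> * s powr (1 / \<alpha>)")
  case True
  have "s * r \<le> s * (\<delta> * s powr (1 / \<alpha>))" using True assms by (intro mult_left_mono) auto
  also have "\<dots> = \<delta> * s powr (1 + 1 / \<alpha>)"
    using assms by (cases "s = 0") (simp_all add: powr_add)
  finally have "s * r \<le> \<delta> * s powr (1 + 1 / \<alpha>)" .
  moreover have "0 \<le> \<delta> powr (- \<alpha>) * r powr (1 + \<alpha>)" by simp
  ultimately show ?thesis by linarith
next
  case False
  hence "s powr (1 / \<alpha>) < r / \<delta>" using assms by (simp add: field_simps)
  hence "(s powr (1 / \<alpha>)) powr \<alpha> < (r / \<delta>) powr \<alpha>" using assms by (intro powr_less_mono2) auto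
  hence "s < (r / \<delta>) powr \<alpha>" using assms by (simp add: powr_powr)
  hence "s * r \<le> (r / \<delta>) powr \<alpha> * r" using assms by (intro mult_right_mono) auto
  also have "\<dots> = r powr \<alpha> * r / \<delta> powr \<alpha>" using assms by (simp add: powr_divide)
  also have "\<dots> = \<delta> powr (- \<alpha>) * r powr (1 + \<alpha>)"
    using assms by (cases "r = 0") (simp_all add: powr_add powr_minus divide_inverse)
  finally have "s * r \<le> \<delta> powr (- \<alpha>) * r powr (1 + \<alpha>)" .
  moreover have "0 \<le> \<delta> * s powr (1 + 1 / \<alpha>)" using assms by simp
  ultimately show ?thesis by linarith
qed

lemma linear_le_mult_powr_plus_const:
  fixes r M \<alpha> a :: real
  assumes "0 \<le> r" "0 < M" "0 < \<alpha>" "0 < a"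
  shows "a * r \<le> M * r powr (1 + \<alpha>) + a * (a / M) powr (1 / \<alpha>)"
proof (cases "a \<le> M * r powr \<alpha>")
  case True
  hence "a * r \<le> M * r powr \<alpha> * r" using assms by (intro mult_right_mono) auto
  also have "\<dots> = M * r powr (1 + \<alpha>)" using assms by (cases "r = 0") (simp_all add: powr_add)
  finally show ?thesis using assms by (simp add: add_increasing2)
next
  case False
  hence "r powr \<alpha> < a / M" using assms by (simp add: field_simps)
  hence "(r powr \<alpha>) powr (1 / \<alpha>) < (a / M) powr (1 / \<alpha>)" using assms by (intro powr_less_mono2) auto
  hence "r < (a / M) powr (1 / \<alpha>)" using assms by (simp add: powr_powr)
  hence "a * r \<le> a * (a / M) powr (1 / \<alpha>)" using assms by (intro mult_left_mono) auto
  thus ?thesis using assms by (simp add: add_increasing)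
qed

section \<open>Functionals, hyperplanes and tangency\<close>

lemma norm_blinfun_le_if_le:
  fixes f :: "'a::real_normed_vector \<Rightarrow>\<^sub>L real"
  assumes "\<And>h. norm h \<le> 1 \<Longrightarrow> f h \<le> B"
  shows "norm f \<le> B"
proof (rule norm_blinfun_bound)
  show "0 \<le> B" using assms[of 0] by simp
  fix h :: 'a
  show "norm (f h) \<le> B * norm h"
  proof (cases "h = 0")
    case False
    hence n: "norm h > 0" by simp
    have "f (sgn h) \<le> B" "- f (sgn h) \<le> B"
      using assms[of "sgn h"] assms[of "- sgn h"] by (simp_all add: norm_sgn blinfun.minus_right)
    moreover have "f h = norm h * f (sgn h)"
      using n by (simp add: sgn_div_norm blinfun.scaleR_right)
    ultimately show ?thesis using n by (simp add: abs_mult abs_le_iff mult.commute)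
  qed simp
qed

lemma exists_unit_half_norm_blinfun:
  fixes f :: "'a::real_normed_vector \<Rightarrow>\<^sub>L real"
  assumes "f \<noteq> 0"
  obtains u where "norm u = 1" "norm f / 2 \<le> f u"
proof -
  have "\<exists>u. norm u = 1 \<and> norm f / 2 \<le> f u"
  proof (rule ccontr)
    assume "\<not> ?thesis"
    hence small: "f u < norm f / 2" if "norm u = 1" for u
      using that by (auto simp: not_le)
    have "norm f \<le> norm f / 2"
    proof (rule norm_blinfun_le_if_le)
      fix h :: 'a assume h: "norm h \<le> 1"
      show "f h \<le> norm f / 2"
      proof (cases "h = 0")
        case False
        hence "f h = norm h * f (sgn h)" by (simp add: sgn_div_norm blinfun.scaleR_right)
        also have "\<dots> \<le> norm h * (norm f / 2)"
          using small[of "sgn h"] False by (intro mult_left_mono) (auto simp: norm_sgn)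
        also have "\<dots> \<le> norm f / 2" using h by (simp add: mult_left_le_one_le)
        finally show ?thesis .
      qed simp
    qed
    thus False using assms by simp
  qed
  thus thesis using that by blast
qed

lemma exists_blinfun_eq_1:
  fixes f :: "'a::real_normed_vector \<Rightarrow>\<^sub>L real"
  assumes "f \<noteq> 0"
  obtains w where "f w = 1" "norm w \<le> 2 / norm f"
proof -
  obtain u where u: "norm u = 1" "norm f / 2 \<le> f u"
    using exists_unit_half_norm_blinfun[OF assms] by blast
  have nf: "norm f > 0" using assms by simp
  hence fu: "f u > 0" using u by linarith
  show thesis
  proof
    show "f ((1 / f u) *\<^sub>R u) = 1" using fu by (simp add: blinfun.scaleR_right)
    show "norm ((1 / f u) *\<^sub>R u) \<le> 2 / norm f" using u nf fu by (simp add: field_simps)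
  qed
qed

lemma blinfun_apply_sgn:
  fixes f :: "'a::real_normed_vector \<Rightarrow>\<^sub>L real"
  shows "sgn f h = f h / norm f"
  by (simp add: sgn_div_norm blinfun.scaleR_left divide_inverse mult.commute)

lemma norm_sgn_diff_le:
  fixes a b :: "'a::real_normed_vector"
  assumes "a \<noteq> 0"
  shows "norm (sgn a - sgn b) \<le> 2 * norm (a - b) / norm a"
proof (cases "b = 0")
  case True thus ?thesis using assms by (simp add: norm_sgn)
next
  case False
  have na: "norm a > 0" and nb: "norm b > 0" using assms False by simp_all
  have "sgn a - sgn b = (1 / norm a) *\<^sub>R (a - b) + (1 / norm a - 1 / norm b) *\<^sub>R b"
    by (simp add: sgn_div_norm algebra_simps divide_inverse)
  hence "norm (sgn a - sgn b) \<le> norm (a - b) / norm a + \<bar>1 / norm a - 1 / norm b\<bar> * norm b"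
    using norm_triangle_ineq[of "(1 / norm a) *\<^sub>R (a - b)" "(1 / norm a - 1 / norm b) *\<^sub>R b"] na
    by simp
  also have "\<bar>1 / norm a - 1 / norm b\<bar> * norm b = \<bar>norm b - norm a\<bar> / norm a"
    using na nb by (simp add: field_simps abs_div)
  also have "\<dots> \<le> norm (a - b) / norm a"
    using na norm_triangle_ineq3[of b a]
      by (intro divide_right_mono) (auto simp: norm_minus_commute)
  finally show ?thesis by simp
qed

lemma le_infdist:
  assumes "H \<noteq> {}" "\<And>z. z \<in> H \<Longrightarrow> c \<le> dist y z"
  shows "c \<le> infdist y H"
  using assms by (simp add: infdist_notempty cINF_greatest)

lemma convex_shrink_mem_interior:
  fixes S :: "'a::real_normed_vector set"
  assumes "convex S" and "x \<in> S" and "ball p r \<subseteq> S" and "0 < r" and "0 < s" "s \<le> 1"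
  shows "x + s *\<^sub>R (p - x) \<in> interior S"
proof -
  let ?q = "x + s *\<^sub>R (p - x)"
  have "ball ?q (s * r) \<subseteq> S"
  proof
    fix z assume z: "z \<in> ball ?q (s * r)"
    define p' where "p' = p + (1 / s) *\<^sub>R (z - ?q)"
    have "dist p p' = norm (z - ?q) / s" using assms by (simp add: p'_def dist_norm)
    also have "\<dots> < r" using z assms by (simp add: dist_norm norm_minus_commute field_simps)
    finally have "p' \<in> S" using assms by auto
    moreover have "z = (1 - s) *\<^sub>R x + s *\<^sub>R p'"
      using assms by (simp add: p'_def algebra_simps)
    ultimately show "z \<in> S" using convexD_alt[OF assms(1,2), of p' s] assms by simp
  qed
  thus ?thesis using assms by (meson centre_in_ball interior_maximal mult_pos_pos open_ball subsetD)
qed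

lemma convex_sublevel:
  assumes "convex_on UNIV G"
  shows "convex {z. G z \<le> c}"
proof (rule convexI)
  fix x y :: 'a and u v :: real
  assume "x \<in> {z. G z \<le> c}" "y \<in> {z. G z \<le> c}" "0 \<le> u" "0 \<le> v" "u + v = 1"
  thus "u *\<^sub>R x + v *\<^sub>R y \<in> {z. G z \<le> c}"
    using convex_lower[OF assms, of x y u v] by simp
qed

lemma infdist_hyperplane_le:
  fixes D :: "'a \<Rightarrow> 'a::real_normed_vector \<Rightarrow>\<^sub>L real"
  assumes "D x e = 1"
  shows "infdist y (hyperplane_at D x) \<le> \<bar>D x (y - x)\<bar> * norm e"
proof -
  have "y - D x (y - x) *\<^sub>R e \<in> hyperplane_at D x"
    using assms by (simp add: hyperplane_at_def blinfun.diff_right blinfun.scaleR_right)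
  hence "infdist y (hyperplane_at D x) \<le> dist y (y - D x (y - x) *\<^sub>R e)" by (rule infdist_le)
  thus ?thesis by (simp add: dist_norm)
qed

lemma abs_le_infdist_hyperplane:
  fixes D :: "'a \<Rightarrow> 'a::real_normed_vector \<Rightarrow>\<^sub>L real"
  assumes "norm (D x) = 1"
  shows "\<bar>D x (y - x)\<bar> \<le> infdist y (hyperplane_at D x)"
proof (rule le_infdist)
  show "hyperplane_at D x \<noteq> {}" by (auto simp: hyperplane_at_def)
  fix z assume "z \<in> hyperplane_at D x"
  hence "D x (y - x) = D x (y - z)" by (simp add: hyperplane_at_def blinfun.diff_right)
  also have "\<bar>\<dots>\<bar> \<le> norm (y - z)" using norm_blinfun[of "D x" "y - z"] assms by simp
  finally show "\<bar>D x (y - x)\<bar> \<le> dist y z" by (simp add: dist_norm)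
qed

lemma tangent_atI:
  fixes S H :: "'a::real_normed_vector set"
  assumes "x \<in> S" "x \<in> H" "0 < \<alpha>"
    and "\<And>y. y \<in> S \<Longrightarrow> infdist y H \<le> c * norm (y - x) powr (1 + \<alpha>)"
  shows "tangent_at H S x"
  unfolding tangent_at_def
proof (intro conjI assms(1,2))
  have "\<forall>\<^sub>F y in at x within S. norm (infdist y H / norm (y - x)) \<le> c * norm (y - x) powr \<alpha>"
    unfolding eventually_at_filter
  proof (intro always_eventually allI impI)
    fix y assume y: "y \<noteq> x" "y \<in> S"
    hence "infdist y H \<le> (c * norm (y - x) powr \<alpha>) * norm (y - x)"
      using assms(4) by (simp add: powr_add mult_ac)
    thus "norm (infdist y H / norm (y - x)) \<le> c * norm (y - x) powr \<alpha>"
      using y by (simp add: infdist_nonneg divide_le_eq)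
  qed
  moreover have "((\<lambda>y. norm (y - x)) \<longlongrightarrow> 0) (at x within S)"
    by (intro tendsto_norm_zero) (auto intro!: tendsto_eq_intros)
  hence "((\<lambda>y. c * norm (y - x) powr \<alpha>) \<longlongrightarrow> 0) (at x within S)"
    using assms(3) by (intro tendsto_mult_right_zero tendsto_zero_powrI) auto
  ultimately show "((\<lambda>y. infdist y H / norm (y - x)) \<longlongrightarrow> 0) (at x within S)"
    by (rule Lim_null_comparison)
qed

lemma ratio_le_0_if_tangent_at:
  fixes y :: "real \<Rightarrow> 'a::real_normed_vector"
  assumes "tangent_at H S x" and "(y \<longlongrightarrow> x) (at_right 0)"
    and "\<forall>\<^sub>F t in at_right 0. y t \<in> S \<and> y t \<noteq> x \<and> \<rho> \<le> infdist (y t) H / norm (y t - x)"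
  shows "\<rho> \<le> 0"
proof -
  have "filterlim y (at x within S) (at_right 0)"
    using assms(2,3) by (auto simp: filterlim_at elim: eventually_mono)
  moreover have "((\<lambda>z. infdist z H / norm (z - x)) \<longlongrightarrow> 0) (at x within S)"
    using assms(1) by (simp add: tangent_at_def)
  ultimately have "((\<lambda>t. infdist (y t) H / norm (y t - x)) \<longlongrightarrow> 0) (at_right 0)"
    by (rule filterlim_compose[rotated])
  thus ?thesis using assms(3) by (intro tendsto_lowerbound) (auto elim: eventually_mono)
qed

section \<open>Convex functions with a one-sided second-difference bound\<close>

locale convex_semiconcave =
  fixes F :: "'a::real_normed_vector \<Rightarrow> real" and c \<alpha> :: real
  assumes alpha_pos: "0 < \<alpha>"
    and convex: "convex_on UNIV F"
    and second_difference: "\<And>x h. F (x + h) + F (x - h) - 2 * F x \<le> c * norm h powr (1 + \<alpha>)"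
    and locally_bounded_above: "\<And>x. \<exists>B. \<forall>h. norm h \<le> 1 \<longrightarrow> F (x + h) \<le> B"
begin

definition fwd_slope :: "'a \<Rightarrow> 'a \<Rightarrow> real \<Rightarrow> real"
  where "fwd_slope x h t = (F (x + t *\<^sub>R h) - F x) / t"

definition bwd_slope :: "'a \<Rightarrow> 'a \<Rightarrow> real \<Rightarrow> real"
  where "bwd_slope x h t = (F x - F (x - t *\<^sub>R h)) / t"

definition dir_deriv :: "'a \<Rightarrow> 'a \<Rightarrow> real"
  where "dir_deriv x h = Inf (fwd_slope x h ` {0<..})"

lemma bwd_slope_le_fwd_slope:
  assumes "0 < s" "0 < t"
  shows "bwd_slope x h s \<le> fwd_slope x h t"
proof -
  define \<mu> where "\<mu> = s / (s + t)"
  have "(1 - \<mu>) *\<^sub>R (x - s *\<^sub>R h) + \<mu> *\<^sub>R (x + t *\<^sub>R h) = x + (\<mu> * t - (1 - \<mu>) * s) *\<^sub>R h"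
    by (simp add: algebra_simps)
  also have "\<mu> * t - (1 - \<mu>) * s = 0" using assms by (simp add: \<mu>_def field_simps)
  finally have "F x \<le> (1 - \<mu>) * F (x - s *\<^sub>R h) + \<mu> * F (x + t *\<^sub>R h)"
    using convex_onD[OF convex, of \<mu> "x - s *\<^sub>R h" "x + t *\<^sub>R h"] assms by (simp add: \<mu>_def)
  also have "1 - \<mu> = t / (s + t)" using assms by (simp add: \<mu>_def field_simps)
  finally have "F x \<le> (t * F (x - s *\<^sub>R h) + s * F (x + t *\<^sub>R h)) / (s + t)"
    by (simp add: \<mu>_def add_divide_distrib)
  hence "t * (F x - F (x - s *\<^sub>R h)) \<le> s * (F (x + t *\<^sub>R h) - F x)"
    using assms by (simp add: pos_le_divide_eq algebra_simps)
  thus ?thesis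
    using assms unfolding fwd_slope_def bwd_slope_def by (simp add: divide_simps mult.commute)
qed

lemma fwd_slope_le_bwd_slope:
  assumes "0 < t"
  shows "fwd_slope x h t \<le> bwd_slope x h t + c * t powr \<alpha> * norm h powr (1 + \<alpha>)"
proof -
  have "F (x + t *\<^sub>R h) + F (x - t *\<^sub>R h) - 2 * F x \<le> c * norm (t *\<^sub>R h) powr (1 + \<alpha>)"
    by (rule second_difference)
  also have "norm (t *\<^sub>R h) powr (1 + \<alpha>) = t * (t powr \<alpha> * norm h powr (1 + \<alpha>))"
    using assms by (simp add: powr_mult powr_add)
  finally have "(F (x + t *\<^sub>R h) + F (x - t *\<^sub>R h) - 2 * F x) / t
    \<le> c * t powr \<alpha> * norm h powr (1 + \<alpha>)"
    using assms by (simp add: divide_simps mult_ac)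
  thus ?thesis
    using assms unfolding fwd_slope_def bwd_slope_def
      by (simp add: diff_divide_distrib add_divide_distrib)
qed

lemma bdd_below_fwd_slope: "bdd_below (fwd_slope x h ` {0<..})"
  by (rule bdd_belowI2[of _ "bwd_slope x h 1"]) (simp add: bwd_slope_le_fwd_slope)

lemma bwd_slope_le_dir_deriv: "0 < s \<Longrightarrow> bwd_slope x h s \<le> dir_deriv x h"
  unfolding dir_deriv_def by (rule cINF_greatest) (auto intro: bwd_slope_le_fwd_slope)

lemma dir_deriv_le_fwd_slope: "0 < t \<Longrightarrow> dir_deriv x h \<le> fwd_slope x h t"
  unfolding dir_deriv_def by (rule cINF_lower[OF bdd_below_fwd_slope]) simp

text \<open>Forward and backward slopes differ by \<open>O(t\<^sup>\<alpha>)\<close>, so at most one number lies between all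
  of them.\<close>
lemma dir_deriv_eqI:
  assumes "\<And>t. 0 < t \<Longrightarrow> bwd_slope x h t \<le> e \<and> e \<le> fwd_slope x h t"
  shows "dir_deriv x h = e"
proof -
  have "\<bar>dir_deriv x h - e\<bar> \<le> 0"
  proof (rule nonpos_if_le_mult_powr[OF alpha_pos])
    fix t :: real assume "0 < t" "t \<le> 1"
    thus "\<bar>dir_deriv x h - e\<bar> \<le> (c * norm h powr (1 + \<alpha>)) * t powr \<alpha>"
      using dir_deriv_le_fwd_slope[of t x h] bwd_slope_le_dir_deriv[of t x h]
        fwd_slope_le_bwd_slope[of t x h] assms[of t] by (simp add: abs_le_iff mult_ac)
  qed
  thus ?thesis by simp
qed

lemma dir_deriv_lower: "F x + dir_deriv x h \<le> F (x + h)"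
  using dir_deriv_le_fwd_slope[of 1 x h] by (simp add: fwd_slope_def)

lemma dir_deriv_upper: "F (x + h) \<le> F x + dir_deriv x h + c * norm h powr (1 + \<alpha>)"
  using bwd_slope_le_dir_deriv[of 1 x h] fwd_slope_le_bwd_slope[of 1 x h]
  by (simp add: fwd_slope_def bwd_slope_def)

lemma dir_deriv_minus: "dir_deriv x (- h) = - dir_deriv x h"
proof (rule dir_deriv_eqI)
  fix t :: real assume "0 < t"
  moreover have "bwd_slope x (- h) t = - fwd_slope x h t" "fwd_slope x (- h) t = - bwd_slope x h t"
    by (simp_all add: fwd_slope_def bwd_slope_def minus_divide_left)
  ultimately show "bwd_slope x (- h) t \<le> - dir_deriv x h \<and> - dir_deriv x h \<le> fwd_slope x (- h) t"
    using dir_deriv_le_fwd_slope bwd_slope_le_dir_deriv by auto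
qed

lemma dir_deriv_scaleR_pos:
  assumes "0 < a"
  shows "dir_deriv x (a *\<^sub>R h) = a * dir_deriv x h"
proof (rule dir_deriv_eqI)
  fix t :: real assume t: "0 < t"
  have "fwd_slope x (a *\<^sub>R h) t = a * fwd_slope x h (t * a)"
    "bwd_slope x (a *\<^sub>R h) t = a * bwd_slope x h (t * a)"
    using assms t by (simp_all add: fwd_slope_def bwd_slope_def)
  moreover have "0 < t * a" using assms t by simp
  ultimately show "bwd_slope x (a *\<^sub>R h) t \<le> a * dir_deriv x h \<and> a * dir_deriv x h
    \<le> fwd_slope x (a *\<^sub>R h) t"
    using dir_deriv_le_fwd_slope bwd_slope_le_dir_deriv assms by auto
qed

lemma dir_deriv_scaleR: "dir_deriv x (a *\<^sub>R h) = a * dir_deriv x h"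
proof (cases a "0::real" rule: linorder_cases)
  case less
  have "dir_deriv x (a *\<^sub>R h) = dir_deriv x (- ((- a) *\<^sub>R h))" by simp
  also have "\<dots> = a * dir_deriv x h" using less by (simp only: dir_deriv_minus dir_deriv_scaleR_pos)
  finally show ?thesis .
next
  case equal
  thus ?thesis using dir_deriv_minus[of x 0] by simp
qed (simp add: dir_deriv_scaleR_pos)

text \<open>Compare the midpoint of \<open>x + 2t h\<^sub>1\<close> and \<open>x + 2t h\<^sub>2\<close> by convexity,
  and let \<open>t \<rightarrow> 0\<close>.\<close>
lemma dir_deriv_add_le: "dir_deriv x (h1 + h2) \<le> dir_deriv x h1 + dir_deriv x h2"
proof -
  let ?E = "c * 2 powr \<alpha> * (norm h1 powr (1 + \<alpha>) + norm h2 powr (1 + \<alpha>))"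
  have "dir_deriv x (h1 + h2) - (dir_deriv x h1 + dir_deriv x h2) \<le> 0"
  proof (rule nonpos_if_le_mult_powr[OF alpha_pos])
    fix t :: real assume t: "0 < t" "t \<le> 1"
    have t2: "0 < 2 * t" using t by simp
    have "x + t *\<^sub>R (h1 + h2) = (1 - 1/2) *\<^sub>R (x + (2 * t) *\<^sub>R h1) + (1/2) *\<^sub>R (x + (2 * t) *\<^sub>R h2)"
      by (simp add: algebra_simps scaleR_add_left[symmetric])
    hence "F (x + t *\<^sub>R (h1 + h2)) \<le> (1 - 1/2) * F (x + (2 * t) *\<^sub>R h1)
      + (1/2) * F (x + (2 * t) *\<^sub>R h2)"
      using convex_onD[OF convex, of "1/2"] by simp
    hence "fwd_slope x (h1 + h2) t \<le> fwd_slope x h1 (2 * t) + fwd_slope x h2 (2 * t)"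
      using t by (simp add: fwd_slope_def divide_simps)
    moreover have "fwd_slope x hi (2 * t) \<le> dir_deriv x hi
      + c * 2 powr \<alpha> * norm hi powr (1 + \<alpha>) * t powr \<alpha>"
      for hi
      using fwd_slope_le_bwd_slope[OF t2, of x hi] bwd_slope_le_dir_deriv[OF t2, of x hi] t
      by (simp add: powr_mult mult_ac)
    ultimately show "dir_deriv x (h1 + h2) - (dir_deriv x h1 + dir_deriv x h2) \<le> ?E * t powr \<alpha>"
      using dir_deriv_le_fwd_slope[OF t(1), of x "h1 + h2"]
      by (smt (verit, ccfv_threshold) distrib_left mult.assoc mult.commute)
  qed
  thus ?thesis by simp
qed

lemma dir_deriv_add: "dir_deriv x (h1 + h2) = dir_deriv x h1 + dir_deriv x h2"
  using dir_deriv_add_le[of x h1 h2] dir_deriv_add_le[of x "h1 + h2" "- h2"]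
    dir_deriv_minus[of x h2]
  by simp

lemma bounded_linear_dir_deriv: "bounded_linear (dir_deriv x)"
proof -
  obtain B where B: "\<And>h. norm h \<le> 1 \<Longrightarrow> F (x + h) \<le> B" using locally_bounded_above by blast
  have unit: "\<bar>dir_deriv x h\<bar> \<le> B - F x" if "norm h \<le> 1" for h
    using dir_deriv_lower[of x h] dir_deriv_lower[of x "- h"] B[of h] B[of "- h"] that
    by (simp add: dir_deriv_minus)
  have "norm (dir_deriv x h) \<le> norm h * (B - F x)" for h
  proof (cases "h = 0")
    case False
    hence "dir_deriv x h = norm h * dir_deriv x (sgn h)"
      by (simp add: sgn_div_norm dir_deriv_scaleR)
    thus ?thesis using unit[of "sgn h"] by (simp add: norm_sgn abs_mult mult_left_mono)
  qed (use dir_deriv_minus[of x 0] in simp)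
  thus ?thesis by (intro bounded_linear_intro) (auto simp: dir_deriv_add dir_deriv_scaleR)
qed

definition DF :: "'a \<Rightarrow> 'a \<Rightarrow>\<^sub>L real"
  where "DF x = Blinfun (dir_deriv x)"

lemma DF_apply: "DF x h = dir_deriv x h"
  unfolding DF_def using bounded_linear_dir_deriv by (simp add: bounded_linear_Blinfun_apply)

lemma DF_lower: "F x + DF x h \<le> F (x + h)"
  using dir_deriv_lower by (simp add: DF_apply)

lemma DF_upper: "F (x + h) \<le> F x + DF x h + c * norm h powr (1 + \<alpha>)"
  using dir_deriv_upper by (simp add: DF_apply)

lemma has_derivative_DF: "(F has_derivative DF x) (at x)"
  unfolding has_derivative_at_alt
proof (intro conjI allI impI blinfun.bounded_linear_right)
  fix e :: real assume e: "0 < e"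
  have "\<forall>\<^sub>F r in at_right 0. \<bar>c\<bar> * r powr \<alpha> < e"
    by (rule order_tendstoD(2)[OF tendsto_mult_powr_at_right_0[OF alpha_pos] e])
  then obtain d where d: "0 < d" "\<And>r. 0 < r \<Longrightarrow> r < d \<Longrightarrow> \<bar>c\<bar> * r powr \<alpha> < e"
    by (auto simp: eventually_at_right_field)
  show "\<exists>d>0. \<forall>y. norm (y - x) < d \<longrightarrow> norm (F y - F x - DF x (y - x)) \<le> e * norm (y - x)"
  proof (intro exI[of _ d] conjI allI impI d(1))
    fix y assume y: "norm (y - x) < d"
    let ?h = "y - x"
    have "\<bar>F y - F x - DF x ?h\<bar> \<le> \<bar>c\<bar> * norm ?h powr \<alpha> * norm ?h"
    proof -
      have "c * norm ?h powr (1 + \<alpha>) \<le> \<bar>c\<bar> * norm ?h powr \<alpha> * norm ?h"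
        by (cases "?h = 0") (auto simp: powr_add mult_right_mono)
      thus ?thesis using DF_lower[of x ?h] DF_upper[of x ?h] by simp
    qed
    also have "\<dots> \<le> e * norm ?h"
      using d(2)[of "norm ?h"] y by (cases "?h = 0") (auto intro: mult_right_mono)
    finally show "norm (F y - F x - DF x (y - x)) \<le> e * norm (y - x)" by simp
  qed
qed

text \<open>Evaluate the two-sided estimates for \<open>F\<close> at \<open>y + w\<close> with \<open>norm w = norm (x - y)\<close>.\<close>
lemma norm_DF_diff_le: "norm (DF x - DF y) \<le> 2 * \<bar>c\<bar> * norm (x - y) powr \<alpha>"
proof (cases "x = y")
  case False
  define r where "r = norm (x - y)"
  have r: "r > 0" using False by (simp add: r_def)
  have one_sided: "(DF x - DF y) u \<le> 2 * \<bar>c\<bar> * r powr \<alpha>" if u: "norm u = 1" for u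
  proof -
    define w where "w = r *\<^sub>R u"
    have nw: "norm w = r" using u r by (simp add: w_def)
    have "F x + DF x (y + w - x) \<le> F (y + w)" using DF_lower[of x "y + w - x"] by simp
    moreover have "F (y + w) \<le> F y + DF y w + c * r powr (1 + \<alpha>)" using DF_upper[of y w] nw by simp
    moreover have "F y \<le> F x + DF x (y - x) + c * r powr (1 + \<alpha>)"
      using DF_upper[of x "y - x"] by (simp add: r_def norm_minus_commute)
    moreover have "DF x (y + w - x) = DF x (y - x) + DF x w"
      by (simp add: blinfun.add_right[symmetric] algebra_simps)
    ultimately have "r * DF x u - r * DF y u \<le> 2 * c * r powr (1 + \<alpha>)"
      by (simp add: w_def blinfun.scaleR_right)
    hence "r * (DF x - DF y) u \<le> 2 * c * r powr (1 + \<alpha>)"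
      by (simp add: blinfun.diff_left right_diff_distrib)
    also have "\<dots> \<le> r * (2 * \<bar>c\<bar> * r powr \<alpha>)"
      using r by (simp add: powr_add mult_right_mono)
    finally show ?thesis using r by simp
  qed
  show ?thesis
  proof (rule norm_blinfun_bound)
    fix h :: 'a
    show "norm ((DF x - DF y) h) \<le> 2 * \<bar>c\<bar> * norm (x - y) powr \<alpha> * norm h"
    proof (cases "h = 0")
      case False
      have "(DF x - DF y) h = norm h * (DF x - DF y) (sgn h)"
        using False by (simp add: sgn_div_norm blinfun.scaleR_right)
      moreover have "\<bar>(DF x - DF y) (sgn h)\<bar> \<le> 2 * \<bar>c\<bar> * r powr \<alpha>"
        using one_sided[of "sgn h"] one_sided[of "- sgn h"] False
        by (simp add: norm_sgn blinfun.minus_right abs_le_iff)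
      ultimately show ?thesis by (simp add: abs_mult r_def mult.commute mult_left_mono)
    qed simp
  qed simp
qed simp

lemma C1_alpha_with_DF: "C1_alpha_with \<alpha> F DF"
  unfolding C1_alpha_with_def
proof (intro conjI allI exI[of _ "2 * \<bar>c\<bar> + 1"] has_derivative_DF)
  fix x y
  show "norm (DF x - DF y) \<le> (2 * \<bar>c\<bar> + 1) * norm (x - y) powr \<alpha>"
    using norm_DF_diff_le[of x y] by (smt (verit) mult_right_mono powr_ge_zero)
qed simp

end

section \<open>Powers of a uniformly smooth norm\<close>

definition smoothness_bound :: "real \<Rightarrow> real \<Rightarrow> 'a::real_normed_vector itself \<Rightarrow> bool" where
  "smoothness_bound K \<alpha> (_::'a itself) \<longleftrightarrow>
     (\<forall>t>0. \<forall>x h::'a. norm x = 1 \<and> norm h = 1 \<longrightarrow>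
        (norm (x + t *\<^sub>R h) + norm (x - t *\<^sub>R h)) / 2 - 1 \<le> K * t powr (1 + \<alpha>))"

lemma smoothness_power_type_iff:
  "smoothness_power_type \<alpha> TYPE('a::real_normed_vector) \<longleftrightarrow>
     (\<exists>K>0. smoothness_bound K \<alpha> TYPE('a))"
  unfolding smoothness_power_type_def smoothness_bound_def by blast

lemma norm_second_difference_le:
  fixes u h :: "'a::real_normed_vector"
  assumes "smoothness_bound K \<alpha> TYPE('a)" and "u \<noteq> 0"
  shows "norm (u + h) + norm (u - h) - 2 * norm u \<le> 2 * K * norm h powr (1 + \<alpha>) / norm u powr \<alpha>"
proof (cases "h = 0")
  case False
  define t where "t = norm h / norm u"
  have c: "norm u > 0" and t: "t > 0" using assms False by (auto simp: t_def)
  have th: "t *\<^sub>R sgn h = (1 / norm u) *\<^sub>R h" using c False by (simp add: t_def sgn_div_norm)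
  have eqs: "sgn u + t *\<^sub>R sgn h = (1 / norm u) *\<^sub>R (u + h)"
    "sgn u - t *\<^sub>R sgn h = (1 / norm u) *\<^sub>R (u - h)"
    unfolding th
      by (simp_all add: sgn_div_norm scaleR_right_distrib scaleR_right_diff_distrib divide_inverse)
  have "(norm (sgn u + t *\<^sub>R sgn h) + norm (sgn u - t *\<^sub>R sgn h)) / 2 - 1 \<le> K * t powr (1 + \<alpha>)"
    using assms t False unfolding smoothness_bound_def by (simp add: norm_sgn)
  hence "(norm (u + h) / norm u + norm (u - h) / norm u) / 2 - 1 \<le> K * t powr (1 + \<alpha>)"
    unfolding eqs using c by simp
  hence "norm (u + h) + norm (u - h) - 2 * norm u \<le> 2 * norm u * (K * t powr (1 + \<alpha>))"
    using c by (simp add: field_simps)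
  also have "2 * norm u * (K * t powr (1 + \<alpha>)) = 2 * K * norm h powr (1 + \<alpha>) / norm u powr \<alpha>"
    using c False by (simp add: t_def powr_divide powr_add field_simps)
  finally show ?thesis .
qed simp

lemma norm_powr_second_difference_le:
  fixes u h :: "'a::real_normed_vector"
  assumes "smoothness_bound K \<alpha> TYPE('a)" and "0 < K" "0 < \<alpha>" "\<alpha> \<le> 1"
  shows "norm (u + h) powr (1 + \<alpha>) + norm (u - h) powr (1 + \<alpha>) - 2 * norm u powr (1 + \<alpha>)
     \<le> (2 * (1 + \<alpha>) * (K + 1)) * norm h powr (1 + \<alpha>)"
proof (cases "u = 0")
  case False
  have c: "norm u > 0" using False by simp
  have "norm (u + h) powr (1 + \<alpha>) + norm (u - h) powr (1 + \<alpha>) - 2 * norm u powr (1 + \<alpha>)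
     \<le> (1 + \<alpha>) * norm u powr \<alpha> * (2 * K * norm h powr (1 + \<alpha>) / norm u powr \<alpha>)
        + 2 * (1 + \<alpha>) * norm h powr (1 + \<alpha>)"
    using norm_triangle_ineq3[of "u + h" u] norm_triangle_ineq3[of "u - h" u] assms c
    by (intro powr_second_difference_le norm_second_difference_le[OF assms(1) False]) auto
  also have "\<dots> = (2 * (1 + \<alpha>) * (K + 1)) * norm h powr (1 + \<alpha>)"
    using c by (simp add: field_simps)
  finally show ?thesis .
qed (use assms in \<open>simp add: algebra_simps\<close>)

lemma convex_on_norm_powr:
  assumes "0 < \<alpha>"
  shows "convex_on UNIV (\<lambda>u::'a::real_normed_vector. norm u powr (1 + \<alpha>))"
proof (rule convex_onI)
  fix t :: real and x y :: 'a assume t: "0 < t" "t < 1"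
  have "norm ((1 - t) *\<^sub>R x + t *\<^sub>R y) \<le> (1 - t) * norm x + t * norm y"
    by (rule order_trans[OF norm_triangle_ineq]) (use t in simp)
  hence "norm ((1 - t) *\<^sub>R x + t *\<^sub>R y) powr (1 + \<alpha>) \<le> ((1 - t) * norm x + t * norm y) powr (1 + \<alpha>)"
    using assms by (intro powr_mono2) auto
  also have "\<dots> \<le> (1 - t) * norm x powr (1 + \<alpha>) + t * norm y powr (1 + \<alpha>)"
    using t assms by (intro powr_convex_combination_le) auto
  finally show "norm ((1 - t) *\<^sub>R x + t *\<^sub>R y) powr (1 + \<alpha>) \<le> (1 - t) * norm x powr (1 + \<alpha>)
    + t * norm y powr (1 + \<alpha>)" .
qed simp

lemma convex_semiconcave_norm_powr:
  assumes "smoothness_bound K \<alpha> TYPE('a::real_normed_vector)" and "0 < K" "0 < \<alpha>" "\<alpha> \<le> 1"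
  shows "convex_semiconcave (\<lambda>u::'a. norm u powr (1 + \<alpha>)) (2 * (1 + \<alpha>) * (K + 1)) \<alpha>"
proof
  show "\<exists>B. \<forall>h. norm h \<le> 1 \<longrightarrow> norm (x + h) powr (1 + \<alpha>) \<le> B" for x :: 'a
  proof (intro exI allI impI)
    fix h :: 'a assume "norm h \<le> 1"
    hence "norm (x + h) \<le> norm x + 1" using norm_triangle_ineq[of x h] by linarith
    thus "norm (x + h) powr (1 + \<alpha>) \<le> (norm x + 1) powr (1 + \<alpha>)"
      using assms by (intro powr_mono2) auto
  qed
qed (use assms convex_on_norm_powr norm_powr_second_difference_le in auto)

section \<open>Convex \<open>C\<^sup>1\<^sup>,\<^sup>\<alpha>\<close> functions and their sublevel sets\<close>

lemma line_has_real_derivative: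
  fixes F :: "'a::real_normed_vector \<Rightarrow> real"
  assumes "(F has_derivative F') (at (x + s *\<^sub>R h))"
  shows "((\<lambda>s. F (x + s *\<^sub>R h)) has_real_derivative F' h) (at s within S)"
proof -
  have "((\<lambda>s. x + s *\<^sub>R h) has_derivative (\<lambda>d. d *\<^sub>R h)) (at s within S)"
    by (auto intro!: derivative_eq_intros)
  from has_derivative_in_compose[OF this has_derivative_subset[OF assms subset_UNIV]]
  have "((\<lambda>s. F (x + s *\<^sub>R h)) has_derivative (\<lambda>d. F' (d *\<^sub>R h))) (at s within S)"
    by (simp add: o_def)
  moreover have "F' (d *\<^sub>R h) = F' h * d" for d
    using has_derivative_bounded_linear[OF assms] by (simp add: linear_simps mult.commute)
  ultimately show ?thesis unfolding has_field_derivative_def by simp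
qed

lemma convex_on_above_derivative:
  fixes F :: "'a::real_normed_vector \<Rightarrow> real"
  assumes "convex_on UNIV F" and "(F has_derivative F') (at x)"
  shows "F x + F' h \<le> F (x + h)"
proof -
  let ?\<phi> = "\<lambda>s. F (x + s *\<^sub>R h)"
  have "convex_on UNIV ?\<phi>"
  proof (rule convex_onI)
    fix t a b :: real assume t: "0 < t" "t < 1"
    have "x + ((1 - t) * a + t * b) *\<^sub>R h = (1 - t) *\<^sub>R (x + a *\<^sub>R h) + t *\<^sub>R (x + b *\<^sub>R h)"
      by (simp add: algebra_simps)
    thus "?\<phi> ((1 - t) *\<^sub>R a + t *\<^sub>R b) \<le> (1 - t) * ?\<phi> a + t * ?\<phi> b"
      using convex_onD[OF assms(1), of t "x + a *\<^sub>R h" "x + b *\<^sub>R h"] t by simp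
  qed simp
  moreover have "(?\<phi> has_real_derivative F' h) (at 0)"
    using line_has_real_derivative[of F F' x 0 h UNIV] assms(2) by simp
  ultimately have "F' h * (1 - 0) \<le> ?\<phi> 1 - ?\<phi> 0"
    by (intro convex_on_imp_above_tangent) auto
  thus ?thesis by simp
qed

lemma holder_derivative_upper:
  fixes F :: "'a::real_normed_vector \<Rightarrow> real" and DF :: "'a \<Rightarrow> 'a \<Rightarrow>\<^sub>L real"
  assumes deriv: "\<And>y. (F has_derivative DF y) (at y)"
    and holder: "\<And>x y. norm (DF x - DF y) \<le> L * norm (x - y) powr \<alpha>" and "0 < \<alpha>" "0 \<le> L"
  shows "F (x + h) \<le> F x + DF x h + L * norm h powr (1 + \<alpha>)"
proof -
  let ?\<phi> = "\<lambda>s. F (x + s *\<^sub>R h)"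
  have "\<And>s. ((\<lambda>s. F (x + s *\<^sub>R h)) has_derivative (*) (DF (x + s *\<^sub>R h) h)) (at s within {0..1})"
    using line_has_real_derivative[OF deriv] by (simp add: has_field_derivative_def)
  then obtain \<xi> where \<xi>: "\<xi> \<in> {0..1}" "?\<phi> 1 - ?\<phi> 0 = DF (x + \<xi> *\<^sub>R h) h * (1 - 0)"
    using mvt_very_simple[of 0 1 ?\<phi> "\<lambda>s. (*) (DF (x + s *\<^sub>R h) h)"] by auto
  have "DF (x + \<xi> *\<^sub>R h) h - DF x h = (DF (x + \<xi> *\<^sub>R h) - DF x) h" by (simp add: blinfun.diff_left)
  also have "\<dots> \<le> norm (DF (x + \<xi> *\<^sub>R h) - DF x) * norm h"
    using norm_blinfun[of "DF (x + \<xi> *\<^sub>R h) - DF x" h] by simp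
  also have "\<dots> \<le> (L * norm (\<xi> *\<^sub>R h) powr \<alpha>) * norm h"
    using holder[of "x + \<xi> *\<^sub>R h" x] by (intro mult_right_mono) auto
  also have "\<dots> \<le> (L * norm h powr \<alpha>) * norm h"
    using \<xi>(1) assms(3,4)
      by (intro mult_right_mono mult_left_mono powr_mono2) (auto simp: mult_left_le_one_le)
  also have "\<dots> = L * norm h powr (1 + \<alpha>)"
    by (cases "h = 0") (simp_all add: powr_add)
  finally show ?thesis using \<xi>(2) by simp
qed

text \<open>Step from \<open>y\<close> against a direction where \<open>DF y - DF x\<close> is large, with the step length \<open>t\<close>
  that balances the linear gain against the loss \<open>L t\<^sup>1\<^sup>+\<^sup>\<alpha>\<close>.\<close>
lemma convex_C1_alpha_gap:
  fixes F :: "'a::real_normed_vector \<Rightarrow> real" and DF :: "'a \<Rightarrow> 'a \<Rightarrow>\<^sub>L real"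
  assumes lower: "\<And>x h. F x + DF x h \<le> F (x + h)"
    and upper: "\<And>x h. F (x + h) \<le> F x + DF x h + L * norm h powr (1 + \<alpha>)"
    and "0 < \<alpha>" "0 < L"
  shows "F x + DF x (y - x) + (1 / (4 * (4 * L) powr (1 / \<alpha>))) * norm (DF y - DF x) powr (1 + 1 / \<alpha>)
    \<le> F y"
proof (cases "DF y = DF x")
  case True
  thus ?thesis using lower[of x "y - x"] by simp
next
  case False
  define N where "N = norm (DF y - DF x)"
  have N: "N > 0" using False by (simp add: N_def)
  obtain u where u: "norm u = 1" "N / 2 \<le> (DF y - DF x) u"
    using exists_unit_half_norm_blinfun[of "DF y - DF x"] False by (auto simp: N_def)
  define t where "t = (N / (4 * L)) powr (1 / \<alpha>)"
  have t: "t > 0" using N assms by (simp add: t_def)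
  have L_t: "L * (t * t powr \<alpha>) = t * N / 4"
    using N assms by (simp add: t_def powr_powr)
  have "F x + DF x (y - t *\<^sub>R u - x) \<le> F (y - t *\<^sub>R u)" using lower[of x "y - t *\<^sub>R u - x"] by simp
  moreover have "F (y - t *\<^sub>R u) \<le> F y - t * DF y u + L * (t * t powr \<alpha>)"
    using upper[of y "- (t *\<^sub>R u)"] t u
      by (simp add: blinfun.minus_right blinfun.scaleR_right powr_add)
  moreover have "DF x (y - t *\<^sub>R u - x) = DF x (y - x) - t * DF x u"
    by (simp add: blinfun.diff_right blinfun.scaleR_right)
  moreover have "t * (N / 2) \<le> t * (DF y u - DF x u)"
    using u t by (intro mult_left_mono) (auto simp: blinfun.diff_left)
  ultimately have "F x + DF x (y - x) + t * N / 4 \<le> F y"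
    unfolding L_t by (simp add: algebra_simps)
  moreover have "t * N / 4 = (1 / (4 * (4 * L) powr (1 / \<alpha>))) * N powr (1 + 1 / \<alpha>)"
    using N assms by (simp add: t_def powr_divide powr_add mult_ac)
  ultimately show ?thesis by (simp add: N_def)
qed

lemma interior_sublevel:
  fixes G :: "'a::real_normed_vector \<Rightarrow> real" and DG :: "'a \<Rightarrow> 'a \<Rightarrow>\<^sub>L real"
  assumes convex: "convex_on UNIV G" and deriv: "\<And>x. (G has_derivative DG x) (at x)"
    and nonzero: "\<And>z. G z = c \<Longrightarrow> DG z \<noteq> 0"
  shows "interior {z. G z \<le> c} = {z. G z < c}"
proof
  show "interior {z. G z \<le> c} \<subseteq> {z. G z < c}"
  proof
    fix z assume z: "z \<in> interior {z. G z \<le> c}"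
    then obtain r where r: "r > 0" "ball z r \<subseteq> {z. G z \<le> c}" by (meson mem_interior)
    show "z \<in> {z. G z < c}"
    proof (rule ccontr)
      assume "z \<notin> {z. G z < c}"
      hence Gz: "G z = c" using z interior_subset by fastforce
      then obtain u where u: "norm u = 1" "norm (DG z) / 2 \<le> DG z u"
        using exists_unit_half_norm_blinfun nonzero by blast
      have "G z + DG z ((r / 2) *\<^sub>R u) \<le> G (z + (r / 2) *\<^sub>R u)"
        by (rule convex_on_above_derivative[OF convex deriv])
      moreover have "z + (r / 2) *\<^sub>R u \<in> ball z r" using r u by (simp add: dist_norm)
      hence "G (z + (r / 2) *\<^sub>R u) \<le> c" using subsetD[OF r(2)] by simp
      moreover have "0 < DG z u" using u nonzero[OF Gz] zero_less_norm_iff[of "DG z"] by linarith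
      hence "DG z ((r / 2) *\<^sub>R u) > 0" using r by (simp add: blinfun.scaleR_right)
      ultimately show False using Gz by simp
    qed
  qed
  have "continuous_on UNIV G"
    using deriv by (intro continuous_at_imp_continuous_on) (blast intro: has_derivative_continuous)
  thus "{z. G z < c} \<subseteq> interior {z. G z \<le> c}"
    by (intro interior_maximal open_Collect_less) auto
qed

lemma sublevel_C1_alpha_body:
  fixes G :: "'a::real_normed_vector \<Rightarrow> real"
  assumes convex: "convex_on UNIV G" and C1: "C1_alpha_with \<alpha> G DG"
    and nonempty: "\<exists>z. G z < 1"
    and bounds: "0 < M" "\<And>z. G z = 1 \<Longrightarrow> 1 / M \<le> norm (DG z) \<and> norm (DG z) \<le> M"
  shows "C1_alpha_body \<alpha> {z. G z \<le> 1}" and "frontier {z. G z \<le> 1} = {z. G z = 1}"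
proof -
  have deriv: "(G has_derivative DG x) (at x)" for x using C1 by (simp add: C1_alpha_with_def)
  hence "continuous_on UNIV G"
    by (intro continuous_at_imp_continuous_on) (blast intro: has_derivative_continuous)
  hence closed: "closed {z. G z \<le> 1}" by (intro closed_Collect_le) auto
  have interior: "interior {z. G z \<le> 1} = {z. G z < 1}"
    using bounds by (intro interior_sublevel[OF convex deriv]) force
  show frontier: "frontier {z. G z \<le> 1} = {z. G z = 1}"
    unfolding frontier_def closure_closed[OF closed] interior by auto
  show "C1_alpha_body \<alpha> {z. G z \<le> 1}"
    unfolding C1_alpha_body_def convex_body_def
    using closed convex_sublevel[OF convex] nonempty interior frontier convex C1 bounds
    by (intro conjI exI[of _ M] exI[of _ G] exI[of _ DG]) auto
qed

lemma exists_bounded_C1_alpha_body: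
  assumes "smoothness_power_type \<alpha> TYPE('a::real_normed_vector)" and "0 < \<alpha>" "\<alpha> \<le> 1"
  shows "\<exists>V::'a set. bounded V \<and> C1_alpha_body \<alpha> V"
proof -
  obtain K where K: "0 < K" "smoothness_bound K \<alpha> TYPE('a)"
    using assms(1) smoothness_power_type_iff by blast
  let ?G = "\<lambda>u::'a. norm u powr (1 + \<alpha>)"
  interpret G: convex_semiconcave ?G "2 * (1 + \<alpha>) * (K + 1)" \<alpha>
    by (rule convex_semiconcave_norm_powr[OF K(2,1) assms(2,3)])
  have unit_sphere: "{z. ?G z = 1} = {z. norm z = 1}" and unit_ball: "{z. ?G z \<le> 1} = cball 0 1"
    using assms by (auto simp: powr_eq_1_iff powr_le_1_iff)
  have bounds: "1 / 4 \<le> norm (G.DF z) \<and> norm (G.DF z) \<le> 4" if z: "norm z = 1" for z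
  proof
    have "?G z + G.DF z (- z) \<le> ?G (z + - z)" by (rule G.DF_lower)
    hence "1 \<le> G.DF z z" using z assms by (simp add: blinfun.minus_right)
    also have "\<dots> \<le> norm (G.DF z)" using norm_blinfun[of "G.DF z" z] z by simp
    finally show "1 / 4 \<le> norm (G.DF z)" by simp
    show "norm (G.DF z) \<le> 4"
    proof (rule norm_blinfun_le_if_le)
      fix h :: 'a assume h: "norm h \<le> 1"
      have "?G z + G.DF z h \<le> ?G (z + h)" by (rule G.DF_lower)
      moreover have "norm (z + h) \<le> 2" using h z norm_triangle_ineq[of z h] by linarith
      hence "?G (z + h) \<le> 2 powr 2" using assms by (intro order_trans[OF powr_mono2 powr_mono]) auto
      ultimately show "G.DF z h \<le> 4" using z by simp
    qed
  qed
  have "C1_alpha_body \<alpha> {z. ?G z \<le> 1}"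
  proof (rule sublevel_C1_alpha_body(1)[OF convex_on_norm_powr[OF assms(2)] G.C1_alpha_with_DF])
    show "\<exists>z. ?G z < 1" using assms by (intro exI[of _ 0]) simp
    show "1 / 4 \<le> norm (G.DF z) \<and> norm (G.DF z) \<le> 4" if "?G z = 1" for z
      using bounds that unit_sphere by blast
  qed simp
  thus ?thesis unfolding unit_ball using bounded_cball by blast
qed

section \<open>Sufficiency: the body as a sublevel set of a convex envelope\<close>

definition convex_rep :: "'a::real_vector \<Rightarrow> nat \<Rightarrow> (nat \<Rightarrow> real) \<Rightarrow> (nat \<Rightarrow> 'a) \<Rightarrow> bool" where
  "convex_rep z n l xs \<longleftrightarrow> (\<forall>i<n. 0 \<le> l i) \<and> (\<Sum>i<n. l i) = 1 \<and> (\<Sum>i<n. l i *\<^sub>R xs i) = z"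

lemma convex_rep_singleton: "convex_rep z 1 (\<lambda>_. 1) (\<lambda>_. z)"
  by (simp add: convex_rep_def)

lemma convex_rep_translate: "convex_rep z n l xs \<Longrightarrow> convex_rep (z + h) n l (\<lambda>i. xs i + h)"
  by (simp add: convex_rep_def scaleR_right_distrib sum.distrib scaleR_sum_left[symmetric])

lemma sum_lessThan_add_if:
  fixes A B :: "nat \<Rightarrow> 'b::comm_monoid_add"
  shows "(\<Sum>i<m + k. if i < m then A i else B (i - m)) = (\<Sum>i<m. A i) + (\<Sum>j<k. B j)"
  by (induction k) (simp_all add: add.assoc)

lemma convex_rep_append:
  assumes "convex_rep z1 n1 l1 x1" "convex_rep z2 n2 l2 x2" "0 \<le> t" "t \<le> 1"
  shows "convex_rep ((1 - t) *\<^sub>R z1 + t *\<^sub>R z2) (n1 + n2)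
           (\<lambda>i. if i < n1 then (1 - t) * l1 i else t * l2 (i - n1))
           (\<lambda>i. if i < n1 then x1 i else x2 (i - n1))"
proof -
  let ?l = "\<lambda>i. if i < n1 then (1 - t) * l1 i else t * l2 (i - n1)"
  let ?x = "\<lambda>i. if i < n1 then x1 i else x2 (i - n1)"
  have weights: "(\<Sum>i<n1 + n2. ?l i) = (\<Sum>i<n1. (1 - t) * l1 i) + (\<Sum>j<n2. t * l2 j)"
    by (rule sum_lessThan_add_if)
  have points: "(\<Sum>i<n1 + n2. ?l i *\<^sub>R ?x i) = (\<Sum>i<n1. ((1 - t) * l1 i) *\<^sub>R x1 i)
    + (\<Sum>j<n2. (t * l2 j) *\<^sub>R x2 j)"
    using sum_lessThan_add_if[where m = n1 and k = n2 and A = "\<lambda>i. ((1 - t) * l1 i) *\<^sub>R x1 i"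
        and B = "\<lambda>j. (t * l2 j) *\<^sub>R x2 j"]
    by (simp add: if_distrib if_distribR cong: if_cong)
  show ?thesis
    unfolding convex_rep_def weights points using assms
    by (auto simp: convex_rep_def sum_distrib_left[symmetric] scaleR_sum_right[symmetric]
        scaleR_scaleR[symmetric] simp del: scaleR_scaleR)
qed

locale compatible_normals =
  fixes \<alpha> \<delta> K :: real and C :: "'a::real_normed_vector set" and D :: "'a \<Rightarrow> 'a \<Rightarrow>\<^sub>L real"
  assumes alpha: "0 < \<alpha>" "\<alpha> \<le> 1" and delta: "0 < \<delta>"
    and smooth: "smoothness_bound K \<alpha> TYPE('a)" and K: "0 < K"
    and nonempty: "C \<noteq> {}"
    and norm_D: "\<And>x. x \<in> C \<Longrightarrow> norm (D x) = 1"
    and compatible: "\<And>x y. x \<in> C \<Longrightarrow> y \<in> C \<Longrightarrow> \<delta> * norm (D x - D y) powr (1 + 1 / \<alpha>) \<le> D y (y - x)"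
begin

abbreviation psi :: "'a \<Rightarrow> real" where "psi u \<equiv> norm u powr (1 + \<alpha>)"

text \<open>\<open>M\<close> is the constant of Young's inequality \<open>young_powr\<close> for \<open>\<delta>\<close>, and \<open>c\<^sub>\<psi>\<close> the
  semiconcavity constant of \<open>psi\<close> from \<open>norm_powr_second_difference_le\<close>.\<close>
definition M where "M = \<delta> powr (- \<alpha>)"
definition c\<^sub>\<psi> where "c\<^sub>\<psi> = 2 * (1 + \<alpha>) * (K + 1)"
definition c0 where "c0 = (1 / M) powr (1 / \<alpha>)"

lemma M_pos: "0 < M" using delta by (simp add: M_def)
lemma c\<^sub>\<psi>_pos: "0 < c\<^sub>\<psi>" using alpha K by (simp add: c\<^sub>\<psi>_def)

lemma abs_D_le: "x \<in> C \<Longrightarrow> \<bar>D x v\<bar> \<le> norm v"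
  using norm_blinfun[of "D x" v] norm_D[of x] by simp

definition cap :: "'a \<Rightarrow> 'a \<Rightarrow> real" where "cap y z = D y (z - y) + M * psi (z - y)"

lemma affine_le_cap:
  assumes "x \<in> C" "y \<in> C"
  shows "D x (z - x) \<le> cap y z"
proof -
  define s where "s = norm (D x - D y)"
  define r where "r = norm (z - y)"
  have "D x (z - x) - D y (z - y) = (D x - D y) (z - y) + D x (y - x)"
    by (simp add: blinfun.diff_left blinfun.diff_right algebra_simps)
  moreover have "(D x - D y) (z - y) \<le> s * r"
    using norm_blinfun[of "D x - D y" "z - y"] by (simp add: s_def r_def)
  moreover have "D x (y - x) \<le> - \<delta> * s powr (1 + 1 / \<alpha>)"
    using compatible[OF assms(2,1)] by (simp add: s_def norm_minus_commute blinfun.diff_right)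
  moreover have "s * r - \<delta> * s powr (1 + 1 / \<alpha>) \<le> M * r powr (1 + \<alpha>)"
    unfolding M_def by (rule young_powr) (use delta alpha in \<open>auto simp: s_def r_def\<close>)
  ultimately show ?thesis by (simp add: cap_def r_def)
qed

lemma cap_ge_norm:
  assumes "y \<in> C" "0 < a"
  shows "(a - 1) * norm (z - y) - a * (a / M) powr (1 / \<alpha>) \<le> cap y z"
  using linear_le_mult_powr_plus_const[of "norm (z - y)" M \<alpha> a] abs_D_le[OF assms(1), of "z - y"]
    assms M_pos alpha by (simp add: cap_def algebra_simps)

lemma cap_ge: "y \<in> C \<Longrightarrow> - c0 \<le> cap y z"
  using cap_ge_norm[of y 1 z] by (simp add: c0_def)

definition min_cap :: "'a \<Rightarrow> real" where "min_cap z = (INF y\<in>C. cap y z)"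

lemma bdd_below_cap: "bdd_below ((\<lambda>y. cap y z) ` C)"
  by (rule bdd_belowI2[of _ "- c0"]) (rule cap_ge)

lemma min_cap_le: "y \<in> C \<Longrightarrow> min_cap z \<le> cap y z"
  unfolding min_cap_def by (rule cINF_lower[OF bdd_below_cap])

lemma min_cap_ge: "- c0 \<le> min_cap z"
  unfolding min_cap_def using nonempty by (intro cINF_greatest cap_ge) auto

lemma affine_le_min_cap: "x \<in> C \<Longrightarrow> D x (z - x) \<le> min_cap z"
  unfolding min_cap_def using nonempty by (intro cINF_greatest affine_le_cap) auto

lemma exists_cap_less: "0 < e \<Longrightarrow> \<exists>y\<in>C. cap y z < min_cap z + e"
  unfolding min_cap_def using nonempty by (intro cINF_less_iff[THEN iffD1] bdd_below_cap) auto

lemma min_cap_second_difference: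
  "min_cap (x + h) + min_cap (x - h) - 2 * min_cap x \<le> M * c\<^sub>\<psi> * psi h"
proof (rule field_le_epsilon)
  fix e :: real assume "0 < e"
  then obtain y where y: "y \<in> C" "cap y x < min_cap x + e / 2"
    using exists_cap_less[of "e / 2" x] by auto
  have "psi ((x - y) + h) + psi ((x - y) - h) - 2 * psi (x - y) \<le> c\<^sub>\<psi> * psi h"
    unfolding c\<^sub>\<psi>_def by (rule norm_powr_second_difference_le[OF smooth K alpha])
  hence "M * psi ((x - y) + h) + M * psi ((x - y) - h) \<le> 2 * (M * psi (x - y)) + M * c\<^sub>\<psi> * psi h"
    using mult_left_mono[OF _ less_imp_le[OF M_pos]] by (fastforce simp: algebra_simps)
  moreover have shift: "x + h - y = (x - y) + h" "x - h - y = (x - y) - h" by simp_all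
  ultimately have "cap y (x + h) + cap y (x - h) \<le> 2 * cap y x + M * c\<^sub>\<psi> * psi h"
    unfolding cap_def shift by (simp add: blinfun.add_right blinfun.diff_right)
  thus "min_cap (x + h) + min_cap (x - h) - 2 * min_cap x \<le> M * c\<^sub>\<psi> * psi h + e"
    using min_cap_le[OF y(1), of "x + h"] min_cap_le[OF y(1), of "x - h"] y(2) by linarith
qed

definition comb_value :: "nat \<Rightarrow> (nat \<Rightarrow> real) \<Rightarrow> (nat \<Rightarrow> 'a) \<Rightarrow> real"
  where "comb_value n l xs = (\<Sum>i<n. l i * min_cap (xs i))"

text \<open>The convex envelope of \<open>min_cap\<close>.\<close>
definition env :: "'a \<Rightarrow> real"
  where "env z = Inf {comb_value n l xs | n l xs. convex_rep z n l xs}"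

lemma comb_value_ge:
  assumes "convex_rep z n l xs"
  shows "- c0 \<le> comb_value n l xs"
proof -
  have "- c0 = (\<Sum>i<n. l i) * (- c0)" using assms by (simp add: convex_rep_def)
  also have "\<dots> = (\<Sum>i<n. l i * (- c0))" by (rule sum_distrib_right)
  also have "\<dots> \<le> comb_value n l xs"
    unfolding comb_value_def using assms min_cap_ge
    by (intro sum_mono mult_left_mono) (auto simp: convex_rep_def)
  finally show ?thesis .
qed

lemma affine_le_comb_value:
  assumes "x \<in> C" "convex_rep z n l xs"
  shows "D x (z - x) \<le> comb_value n l xs"
proof -
  have "(\<Sum>i<n. l i *\<^sub>R (xs i - x)) = z - x"
    using assms(2)
      by (simp add: convex_rep_def scaleR_right_diff_distrib sum_subtractf
        scaleR_sum_left[symmetric])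
  hence "D x (z - x) = D x (\<Sum>i<n. l i *\<^sub>R (xs i - x))" by simp
  also have "\<dots> = (\<Sum>i<n. l i * D x (xs i - x))"
    by (simp add: blinfun.sum_right blinfun.scaleR_right)
  also have "\<dots> \<le> comb_value n l xs"
    unfolding comb_value_def using assms affine_le_min_cap
    by (intro sum_mono mult_left_mono) (auto simp: convex_rep_def)
  finally show ?thesis .
qed

lemma comb_values_nonempty: "{comb_value n l xs | n l xs. convex_rep z n l xs} \<noteq> {}"
  using convex_rep_singleton by blast

lemma bdd_below_comb_values: "bdd_below {comb_value n l xs | n l xs. convex_rep z n l xs}"
  by (rule bdd_belowI[of _ "- c0"]) (auto intro: comb_value_ge)

lemma env_le: "convex_rep z n l xs \<Longrightarrow> env z \<le> comb_value n l xs"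
  unfolding env_def by (rule cInf_lower[OF _ bdd_below_comb_values]) blast

lemma env_ge: "- c0 \<le> env z"
  unfolding env_def by (rule cInf_greatest[OF comb_values_nonempty]) (auto intro: comb_value_ge)

lemma affine_le_env: "x \<in> C \<Longrightarrow> D x (z - x) \<le> env z"
  unfolding env_def
    by (rule cInf_greatest[OF comb_values_nonempty]) (auto intro: affine_le_comb_value)

lemma env_le_min_cap: "env z \<le> min_cap z"
  using env_le[OF convex_rep_singleton] by (simp add: comb_value_def)

lemma env_le_cap: "y \<in> C \<Longrightarrow> env z \<le> cap y z"
  using env_le_min_cap min_cap_le order_trans by blast

lemma exists_comb_value_less:
  assumes "0 < e"
  obtains n l xs where "convex_rep z n l xs" "comb_value n l xs < env z + e"
proof -
  have "env z < env z + e" using assms by simp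
  then obtain v where "v \<in> {comb_value n l xs | n l xs. convex_rep z n l xs}" "v < env z + e"
    unfolding env_def
      by (subst (asm) cInf_less_iff[OF comb_values_nonempty bdd_below_comb_values]) blast
  thus thesis using that by blast
qed

lemma convex_on_env: "convex_on UNIV env"
proof (rule convex_onI)
  fix t :: real and z1 z2 :: 'a assume t: "0 < t" "t < 1"
  show "env ((1 - t) *\<^sub>R z1 + t *\<^sub>R z2) \<le> (1 - t) * env z1 + t * env z2"
  proof (rule field_le_epsilon)
    fix e :: real assume e: "0 < e"
    obtain n1 l1 x1 where r1: "convex_rep z1 n1 l1 x1" "comb_value n1 l1 x1 < env z1 + e"
      using exists_comb_value_less[OF e] by blast
    obtain n2 l2 x2 where r2: "convex_rep z2 n2 l2 x2" "comb_value n2 l2 x2 < env z2 + e"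
      using exists_comb_value_less[OF e] by blast
    let ?l = "\<lambda>i. if i < n1 then (1 - t) * l1 i else t * l2 (i - n1)"
    let ?x = "\<lambda>i. if i < n1 then x1 i else x2 (i - n1)"
    have "comb_value (n1 + n2) ?l ?x = (1 - t) * comb_value n1 l1 x1 + t * comb_value n2 l2 x2"
      using sum_lessThan_add_if[where m = n1 and k = n2
          and A = "\<lambda>i. (1 - t) * l1 i * min_cap (x1 i)" and B = "\<lambda>j. t * l2 j * min_cap (x2 j)"]
      by (simp add: comb_value_def if_distrib if_distribR sum_distrib_left mult.assoc cong: if_cong)
    hence "env ((1 - t) *\<^sub>R z1 + t *\<^sub>R z2) \<le> (1 - t) * comb_value n1 l1 x1
      + t * comb_value n2 l2 x2"
      using env_le[OF convex_rep_append[OF r1(1) r2(1), of t]] t by simp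
    also have "\<dots> \<le> (1 - t) * (env z1 + e) + t * (env z2 + e)"
      using r1 r2 t by (intro add_mono mult_left_mono) auto
    finally show "env ((1 - t) *\<^sub>R z1 + t *\<^sub>R z2) \<le> (1 - t) * env z1 + t * env z2 + e"
      by (simp add: algebra_simps)
  qed
qed simp

lemma env_second_difference: "env (x + h) + env (x - h) - 2 * env x \<le> M * c\<^sub>\<psi> * psi h"
proof (rule field_le_epsilon)
  fix e :: real assume e: "0 < e"
  obtain n l xs where r: "convex_rep x n l xs" "comb_value n l xs < env x + e / 2"
    by (rule exists_comb_value_less[of "e / 2" x]) (use e in auto)
  have "env (x + h) + env (x - h) \<le> comb_value n l (\<lambda>i. xs i + h) + comb_value n l (\<lambda>i. xs i + - h)"
    using env_le[OF convex_rep_translate[OF r(1), of h]]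
      env_le[OF convex_rep_translate[OF r(1), of "- h"]]
    by (simp add: add_mono)
  also have "\<dots> = (\<Sum>i<n. l i * (min_cap (xs i + h) + min_cap (xs i - h)))"
    by (simp add: comb_value_def sum.distrib[symmetric] distrib_left)
  also have "\<dots> \<le> (\<Sum>i<n. l i * (2 * min_cap (xs i) + M * c\<^sub>\<psi> * psi h))"
  proof (intro sum_mono mult_left_mono)
    fix i assume "i \<in> {..<n}"
    thus "0 \<le> l i" using r(1) by (simp add: convex_rep_def)
    show "min_cap (xs i + h) + min_cap (xs i - h) \<le> 2 * min_cap (xs i) + M * c\<^sub>\<psi> * psi h"
      using min_cap_second_difference[of "xs i" h] by simp
  qed
  also have "\<dots> = 2 * comb_value n l xs + M * c\<^sub>\<psi> * psi h"
    using r(1) by (simp add: comb_value_def convex_rep_def algebra_simps sum.distrib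
        sum_distrib_left sum_distrib_right[symmetric])
  finally show "env (x + h) + env (x - h) - 2 * env x \<le> M * c\<^sub>\<psi> * psi h + e"
    using r(2) by linarith
qed

lemma env_locally_bounded_above: "\<exists>B. \<forall>h. norm h \<le> 1 \<longrightarrow> env (x + h) \<le> B"
proof -
  obtain y where y: "y \<in> C" using nonempty by blast
  have "env (x + h) \<le> (norm (x - y) + 1) + M * (norm (x - y) + 1) powr (1 + \<alpha>)"
    if "norm h \<le> 1" for h
  proof -
    have n: "norm (x + h - y) \<le> norm (x - y) + 1"
      using norm_triangle_ineq[of "x - y" h] that by (simp add: algebra_simps)
    have "env (x + h) \<le> cap y (x + h)" by (rule env_le_cap[OF y])
    also have "\<dots> \<le> norm (x + h - y) + M * psi (x + h - y)"
      using abs_D_le[OF y, of "x + h - y"] by (simp add: cap_def)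
    also have "\<dots> \<le> (norm (x - y) + 1) + M * (norm (x - y) + 1) powr (1 + \<alpha>)"
      using n M_pos alpha by (intro add_mono mult_left_mono powr_mono2) auto
    finally show ?thesis .
  qed
  thus ?thesis by blast
qed

sublocale env: convex_semiconcave env "M * c\<^sub>\<psi>" \<alpha>
  using alpha convex_on_env env_second_difference env_locally_bounded_above
  by unfold_locales auto

lemma env_eq_0: "x \<in> C \<Longrightarrow> env x = 0"
  using affine_le_env[of x x] env_le_cap[of x x] by (simp add: cap_def)

lemma DF_env_eq_D:
  assumes x: "x \<in> C"
  shows "env.DF x = D x"
proof (rule blinfun_eqI)
  fix u
  have est: "\<bar>(env.DF x - D x) h\<bar> \<le> (M + M * c\<^sub>\<psi>) * psi h" for h
  proof -
    have "env.DF x h \<le> env (x + h)" using env.DF_lower[of x h] env_eq_0[OF x] by simp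
    moreover have "env (x + h) \<le> D x h + M * psi h" using env_le_cap[OF x, of "x + h"]
      by (simp add: cap_def)
    moreover have "D x h \<le> env (x + h)" using affine_le_env[OF x, of "x + h"] by simp
    moreover have "env (x + h) \<le> env.DF x h + M * c\<^sub>\<psi> * psi h"
      using env.DF_upper[of x h] env_eq_0[OF x] by simp
    moreover have "0 \<le> M * c\<^sub>\<psi> * psi h" using M_pos c\<^sub>\<psi>_pos by simp
    ultimately show ?thesis by (simp add: blinfun.diff_left abs_le_iff algebra_simps)
  qed
  have "\<bar>(env.DF x - D x) u\<bar> \<le> 0"
  proof (rule nonpos_if_le_mult_powr[OF alpha(1)])
    fix t :: real assume t: "0 < t" "t \<le> 1"
    have "t * \<bar>(env.DF x - D x) u\<bar> = \<bar>(env.DF x - D x) (t *\<^sub>R u)\<bar>"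
      using t by (simp add: blinfun.scaleR_right abs_mult)
    also have "\<dots> \<le> (M + M * c\<^sub>\<psi>) * psi (t *\<^sub>R u)" by (rule est)
    also have "psi (t *\<^sub>R u) = t * (t powr \<alpha> * norm u powr (1 + \<alpha>))"
      using t by (simp add: powr_mult powr_add)
    finally show "\<bar>(env.DF x - D x) u\<bar> \<le> ((M + M * c\<^sub>\<psi>) * norm u powr (1 + \<alpha>)) * t powr \<alpha>"
      using t by (simp add: mult_ac)
  qed
  thus "env.DF x u = D x u" by (simp add: blinfun.diff_left)
qed

definition c2 where "c2 = 2 * (2 / M) powr (1 / \<alpha>)"
definition r0 where "r0 = (1 / (4 * M)) powr (1 / \<alpha>)"
definition R where "R = 2 + c2 + r0"

lemma r0_pos: "0 < r0" using M_pos by (simp add: r0_def)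
lemma R_pos: "0 < R" using r0_pos by (simp add: R_def c2_def add_nonneg_pos)

lemma exists_convex_rep_near_C:
  assumes "env z \<le> 0"
  obtains n l xs ys where "convex_rep z n l xs" "\<And>i. i < n \<Longrightarrow> ys i \<in> C"
    "(\<Sum>i<n. l i * norm (xs i - ys i)) \<le> 2 + c2"
proof -
  obtain n l xs where r: "convex_rep z n l xs" "comb_value n l xs < env z + 1"
    using exists_comb_value_less[OF zero_less_one] by blast
  have "\<forall>i. \<exists>y. i < n \<longrightarrow> y \<in> C \<and> cap y (xs i) < min_cap (xs i) + 1"
    using exists_cap_less[of 1] by auto
  then obtain ys where ys: "\<And>i. i < n \<Longrightarrow> ys i \<in> C \<and> cap (ys i) (xs i) < min_cap (xs i) + 1"
    by metis
  have "(\<Sum>i<n. l i * norm (xs i - ys i)) \<le> (\<Sum>i<n. l i * (min_cap (xs i) + (1 + c2)))"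
  proof (intro sum_mono mult_left_mono)
    fix i assume "i \<in> {..<n}"
    thus "norm (xs i - ys i) \<le> min_cap (xs i) + (1 + c2)" "0 \<le> l i"
      using cap_ge_norm[of "ys i" 2 "xs i"] ys[of i] r(1) by (auto simp: c2_def convex_rep_def)
  qed
  also have "\<dots> = comb_value n l xs + (1 + c2)"
    using r(1) by (simp add: comb_value_def convex_rep_def distrib_left sum.distrib
        sum_distrib_right[symmetric])
  finally show thesis using that r assms ys by fastforce
qed

lemma norm_convex_rep_diff_le:
  assumes "convex_rep z n l xs" "convex_rep w n l ws"
  shows "norm (w - z) \<le> (\<Sum>i<n. l i * norm (ws i - xs i))"
proof -
  have "w - z = (\<Sum>i<n. l i *\<^sub>R (ws i - xs i))"
    using assms by (simp add: convex_rep_def scaleR_right_diff_distrib sum_subtractf)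
  also have "norm \<dots> \<le> (\<Sum>i<n. norm (l i *\<^sub>R (ws i - xs i)))" by (rule norm_sum)
  also have "\<dots> = (\<Sum>i<n. l i * norm (ws i - xs i))"
    using assms(1) by (intro sum.cong) (auto simp: convex_rep_def)
  finally show ?thesis .
qed

text \<open>Moving each nearby point of \<open>C\<close> inwards
  by \<open>r0\<close> against \<open>D\<close> pushes \<open>min_cap\<close> down to \<open>- r0 / 4\<close>.\<close>
lemma exists_deep_point_near:
  assumes "env z \<le> 0"
  obtains w where "norm (w - z) \<le> R" "env w \<le> - r0 / 4"
proof -
  obtain n l xs ys where r: "convex_rep z n l xs" and ys: "\<And>i. i < n \<Longrightarrow> ys i \<in> C"
    and near: "(\<Sum>i<n. l i * norm (xs i - ys i)) \<le> 2 + c2"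
    using exists_convex_rep_near_C[OF assms] by blast
  have "\<forall>i. \<exists>u. i < n \<longrightarrow> norm u = 1 \<and> 1 / 2 \<le> D (ys i) u"
    using norm_D[OF ys] exists_unit_half_norm_blinfun[of "D (ys _)"]
      by (metis norm_zero zero_neq_one)
  then obtain us where us: "\<And>i. i < n \<Longrightarrow> norm (us i) = 1 \<and> 1 / 2 \<le> D (ys i) (us i)" by metis
  define ws where "ws i = ys i - r0 *\<^sub>R us i" for i
  define w where "w = (\<Sum>i<n. l i *\<^sub>R ws i)"
  have rw: "convex_rep w n l ws" using r by (simp add: convex_rep_def w_def)
  have M_r0: "M * r0 powr (1 + \<alpha>) = r0 / 4"
    using M_pos alpha r0_pos by (simp add: r0_def powr_add powr_powr)
  have deep: "min_cap (ws i) \<le> - r0 / 4" if i: "i < n" for i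
  proof -
    have "min_cap (ws i) \<le> cap (ys i) (ws i)" using min_cap_le ys[OF i] by blast
    also have "\<dots> = - r0 * D (ys i) (us i) + r0 / 4"
      using us[OF i] r0_pos M_r0
        by (simp add: cap_def ws_def blinfun.minus_right blinfun.scaleR_right)
    also have "\<dots> \<le> - r0 / 4" using us[OF i] r0_pos by simp
    finally show ?thesis .
  qed
  have "env w \<le> comb_value n l ws" by (rule env_le[OF rw])
  also have "\<dots> \<le> (\<Sum>i<n. l i * (- r0 / 4))"
    unfolding comb_value_def using r deep
      by (intro sum_mono mult_left_mono) (auto simp: convex_rep_def)
  also have "\<dots> = (\<Sum>i<n. l i) * (- r0 / 4)" by (rule sum_distrib_right[symmetric])
  finally have "env w \<le> - r0 / 4" using r by (simp add: convex_rep_def)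
  moreover have "norm (w - z) \<le> R"
  proof -
    have "norm (ws i - xs i) \<le> norm (xs i - ys i) + r0" if "i < n" for i
      using norm_triangle_ineq4[of "ys i - xs i" "r0 *\<^sub>R us i"] us[OF that] r0_pos
      by (simp add: ws_def norm_minus_commute algebra_simps)
    hence "(\<Sum>i<n. l i * norm (ws i - xs i)) \<le> (\<Sum>i<n. l i * (norm (xs i - ys i) + r0))"
      using r by (intro sum_mono mult_left_mono) (auto simp: convex_rep_def)
    also have "\<dots> = (\<Sum>i<n. l i * norm (xs i - ys i)) + r0"
      using r by (simp add: convex_rep_def distrib_left sum.distrib sum_distrib_right[symmetric])
    finally have "(\<Sum>i<n. l i * norm (ws i - xs i)) \<le> (\<Sum>i<n. l i * norm (xs i - ys i)) + r0" .
    thus ?thesis using norm_convex_rep_diff_le[OF r rw] near by (simp add: R_def)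
  qed
  ultimately show thesis using that by blast
qed

lemma exists_convex_hull_near:
  assumes "env z \<le> 0"
  obtains v where "v \<in> convex hull C" "norm (z - v) \<le> R"
proof -
  obtain n l xs ys where r: "convex_rep z n l xs" and ys: "\<And>i. i < n \<Longrightarrow> ys i \<in> C"
    and near: "(\<Sum>i<n. l i * norm (xs i - ys i)) \<le> 2 + c2"
    using exists_convex_rep_near_C[OF assms] by blast
  define v where "v = (\<Sum>i<n. l i *\<^sub>R ys i)"
  have rv: "convex_rep v n l ys" using r by (simp add: convex_rep_def v_def)
  have "v \<in> convex hull C"
    unfolding v_def using r ys
      by (intro convex_sum) (auto simp: convex_rep_def hull_subset[THEN subsetD])
  moreover have "norm (z - v) \<le> R"
    using norm_convex_rep_diff_le[OF rv r] near r0_pos by (simp add: R_def)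
  ultimately show thesis using that by blast
qed

lemma norm_DF_env_bounds:
  assumes "env z = 0"
  shows "r0 / (4 * R) \<le> norm (env.DF z)" "norm (env.DF z) \<le> c0 + M * c\<^sub>\<psi>"
proof -
  have "env z \<le> 0" using assms by simp
  then obtain w where w: "norm (w - z) \<le> R" "env w \<le> - r0 / 4" by (rule exists_deep_point_near)
  have "r0 / 4 \<le> - env.DF z (w - z)" using env.DF_lower[of z "w - z"] assms w by simp
  also have "\<dots> \<le> norm (env.DF z) * norm (w - z)"
    using norm_blinfun[of "env.DF z" "w - z"] by (simp add: abs_le_iff)
  also have "\<dots> \<le> norm (env.DF z) * R" using w by (intro mult_left_mono) auto
  finally show "r0 / (4 * R) \<le> norm (env.DF z)" using R_pos by (simp add: field_simps)
  show "norm (env.DF z) \<le> c0 + M * c\<^sub>\<psi>"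
  proof (rule norm_blinfun_le_if_le)
    fix h :: 'a assume h: "norm h \<le> 1"
    have "env (z + - h) \<le> env z + env.DF z (- h) + M * c\<^sub>\<psi> * psi (- h)" by (rule env.DF_upper)
    moreover have "M * c\<^sub>\<psi> * psi (- h) \<le> M * c\<^sub>\<psi>"
      using h alpha M_pos c\<^sub>\<psi>_pos by (simp add: powr_le1 mult_left_le)
    moreover have "- c0 \<le> env (z + - h)" by (rule env_ge)
    ultimately show "env.DF z h \<le> c0 + M * c\<^sub>\<psi>" using assms by (simp add: blinfun.minus_right)
  qed
qed

definition V :: "'a set" where "V = {z. env z \<le> 0}"

lemma C1_alpha_body_V: "C1_alpha_body \<alpha> V" and frontier_V: "frontier V = {z. env z = 0}"
proof -
  define Mb where "Mb = 4 * R / r0 + c0 + M * c\<^sub>\<psi>"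
  have c0: "0 < c0" using M_pos by (simp add: c0_def)
  have Mb: "0 < Mb" "4 * R / r0 \<le> Mb" "c0 + M * c\<^sub>\<psi> \<le> Mb"
    using R_pos r0_pos c0 M_pos c\<^sub>\<psi>_pos by (simp_all add: Mb_def add_pos_pos)
  have V_eq: "V = {z. env z + 1 \<le> 1}" by (simp add: V_def)
  have convex: "convex_on UNIV (\<lambda>z. env z + 1)"
    using convex_on_env by (intro convex_on_add) (simp_all add: convex_on_const)
  have C1: "C1_alpha_with \<alpha> (\<lambda>z. env z + 1) env.DF"
    using env.C1_alpha_with_DF unfolding C1_alpha_with_def by (auto intro: has_derivative_add_const)
  obtain x where "x \<in> C" using nonempty by blast
  hence "env x \<le> 0" by (simp add: env_eq_0)
  then obtain w where "env w \<le> - r0 / 4" by (rule exists_deep_point_near)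
  hence nonempty_interior: "\<exists>z. env z + 1 < 1" using r0_pos by (intro exI[of _ w]) simp
  have bounds: "1 / Mb \<le> norm (env.DF z) \<and> norm (env.DF z) \<le> Mb" if "env z + 1 = 1" for z
  proof
    have "1 / Mb \<le> 1 / (4 * R / r0)" using Mb R_pos r0_pos by (intro divide_left_mono) auto
    also have "\<dots> \<le> norm (env.DF z)" using norm_DF_env_bounds(1)[of z] that by simp
    finally show "1 / Mb \<le> norm (env.DF z)" .
    show "norm (env.DF z) \<le> Mb" using norm_DF_env_bounds(2)[of z] that Mb by simp
  qed
  show "C1_alpha_body \<alpha> V" unfolding V_eq
    by (rule sublevel_C1_alpha_body(1)[OF convex C1 nonempty_interior Mb(1) bounds])
  show "frontier V = {z. env z = 0}" unfolding V_eq
    using sublevel_C1_alpha_body(2)[OF convex C1 nonempty_interior Mb(1) bounds] by simp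
qed

lemma tangent_at_V:
  assumes x: "x \<in> C"
  shows "tangent_at (hyperplane_at D x) (frontier V) x"
proof (rule tangent_atI)
  show "x \<in> frontier V" using env_eq_0[OF x] by (simp add: frontier_V)
  show "x \<in> hyperplane_at D x" by (simp add: hyperplane_at_def)
  obtain e where e: "D x e = 1" "norm e \<le> 2 / norm (D x)"
    using exists_blinfun_eq_1[of "D x"] norm_D[OF x] by force
  fix y assume "y \<in> frontier V"
  hence "env y = 0" by (simp add: frontier_V)
  hence "\<bar>D x (y - x)\<bar> \<le> M * c\<^sub>\<psi> * psi (y - x)"
    using env.DF_lower[of x "y - x"] env.DF_upper[of x "y - x"] env_eq_0[OF x] DF_env_eq_D[OF x]
    by simp
  moreover have "norm e \<le> 2" using e norm_D[OF x] by simp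
  ultimately have "\<bar>D x (y - x)\<bar> * norm e \<le> (M * c\<^sub>\<psi> * psi (y - x)) * 2"
    by (intro mult_mono) auto
  hence "infdist y (hyperplane_at D x) \<le> (M * c\<^sub>\<psi> * psi (y - x)) * 2"
    using infdist_hyperplane_le[of D x e y] e(1) by linarith
  thus "infdist y (hyperplane_at D x) \<le> (2 * M * c\<^sub>\<psi>) * norm (y - x) powr (1 + \<alpha>)"
    by (simp add: mult_ac)
qed (use alpha in simp)

lemma V_subset_halfspace:
  assumes "x \<in> C"
  shows "V \<subseteq> halfspace_at D x"
proof
  fix z assume "z \<in> V"
  thus "z \<in> halfspace_at D x"
    using affine_le_env[OF assms, of z] by (simp add: V_def halfspace_at_def blinfun.diff_right)
qed

lemma supporting_body_V: "supporting_body \<alpha> C D V"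
  unfolding supporting_body_def
  using C1_alpha_body_V env_eq_0 tangent_at_V V_subset_halfspace by (auto simp: frontier_V)

lemma bounded_V:
  assumes "bounded C"
  shows "bounded V"
proof -
  obtain B where B: "\<And>v. v \<in> convex hull C \<Longrightarrow> norm v \<le> B"
    using bounded_convex_hull[OF assms] by (auto simp: bounded_iff)
  have "norm z \<le> B + R" if z: "z \<in> V" for z
  proof -
    have "env z \<le> 0" using z by (simp add: V_def)
    then obtain v where "v \<in> convex hull C" "norm (z - v) \<le> R" by (rule exists_convex_hull_near)
    thus ?thesis using B norm_triangle_ineq[of "z - v" v] by fastforce
  qed
  thus ?thesis by (auto simp: bounded_iff)
qed

end

section \<open>Necessity\<close>

locale C1_alpha_supporting =
  fixes \<alpha> L M :: real and F :: "'a::real_normed_vector \<Rightarrow> real" and DF :: "'a \<Rightarrow> 'a \<Rightarrow>\<^sub>L real"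
    and V C :: "'a set" and D :: "'a \<Rightarrow> 'a \<Rightarrow>\<^sub>L real"
  assumes alpha: "0 < \<alpha>" and L: "0 < L" and M: "0 < M"
    and convex: "convex_on UNIV F"
    and deriv: "\<And>x. (F has_derivative DF x) (at x)"
    and holder: "\<And>x y. norm (DF x - DF y) \<le> L * norm (x - y) powr \<alpha>"
    and frontier_eq: "frontier V = F -` {1}"
    and norm_DF_bounds: "\<And>x. x \<in> frontier V \<Longrightarrow> 1 / M \<le> norm (DF x) \<and> norm (DF x) \<le> M"
    and body: "convex_body V" and C_subset: "C \<subseteq> frontier V"
    and tangent: "\<And>x. x \<in> C \<Longrightarrow> tangent_at (hyperplane_at D x) (frontier V) x"
    and halfspace: "\<And>x. x \<in> C \<Longrightarrow> V \<subseteq> halfspace_at D x"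
    and norm_D: "\<And>x. x \<in> C \<Longrightarrow> norm (D x) = 1"
begin

lemma DF_lower: "F x + DF x h \<le> F (x + h)"
  by (rule convex_on_above_derivative[OF convex deriv])

lemma DF_upper: "F (x + h) \<le> F x + DF x h + L * norm h powr (1 + \<alpha>)"
  using holder_derivative_upper[OF deriv holder alpha] L by simp

lemma continuous_on_F: "continuous_on UNIV F"
  using deriv by (intro continuous_at_imp_continuous_on) (blast intro: has_derivative_continuous)

lemma F_eq_1: "x \<in> C \<Longrightarrow> F x = 1"
  using C_subset frontier_eq by auto

lemma DF_nonzero: "x \<in> C \<Longrightarrow> DF x \<noteq> 0"
  using norm_DF_bounds[of x] C_subset M by (auto simp: subset_iff)

lemma F_neq_1_interior: "p \<in> interior V \<Longrightarrow> F p \<noteq> 1"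
  using frontier_eq by (auto simp: frontier_def)

text \<open>\<open>F - 1\<close> does not vanish on the connected set \<open>interior V\<close>.\<close>
lemma F_less_1_interior_iff:
  assumes "p \<in> interior V" "q \<in> interior V"
  shows "F p < 1 \<longleftrightarrow> F q < 1"
proof -
  have "connected (F ` interior V)"
    using body continuous_on_subset[OF continuous_on_F]
    by (intro connected_continuous_image convex_connected convex_interior)
      (auto simp: convex_body_def)
  hence Icc: "{min (F p) (F q)..max (F p) (F q)} \<subseteq> F ` interior V"
    using assms by (intro connected_contains_Icc) (auto simp: min_def max_def)
  show ?thesis
  proof (rule ccontr)
    assume "\<not> ?thesis"
    hence "1 \<in> {min (F p) (F q)..max (F p) (F q)}"
      using F_neq_1_interior[OF assms(1)] F_neq_1_interior[OF assms(2)]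
        by (auto simp: min_def max_def)
    thus False using Icc F_neq_1_interior by fastforce
  qed
qed

lemma frontier_points_along:
  assumes x: "x \<in> C" and v: "DF x v = 0" and w: "DF x w = 1" and \<beta>: "0 < \<beta>"
  shows "\<forall>\<^sub>F t in at_right 0. \<exists>s. \<bar>s\<bar> \<le> \<beta> * t \<and> F (x + t *\<^sub>R v + s *\<^sub>R w) = 1"
proof -
  define X where "X = L * norm (v - \<beta> *\<^sub>R w) powr (1 + \<alpha>)"
  have "\<forall>\<^sub>F t in at_right 0. X * t powr \<alpha> < \<beta>"
    by (rule order_tendstoD(2)[OF tendsto_mult_powr_at_right_0[OF alpha] \<beta>])
  moreover have "\<forall>\<^sub>F t in at_right (0::real). 0 < t" by (rule eventually_at_right_less)
  ultimately show ?thesis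
  proof eventually_elim
    case (elim t)
    let ?\<phi> = "\<lambda>s. F (x + t *\<^sub>R v + s *\<^sub>R w)"
    have "1 \<le> ?\<phi> (\<beta> * t)"
      using DF_lower[of x "t *\<^sub>R v + (\<beta> * t) *\<^sub>R w"] F_eq_1[OF x] v w mult_pos_pos[OF \<beta> elim(2)]
      by (simp add: blinfun.add_right blinfun.scaleR_right add.assoc)
    moreover have "?\<phi> (- (\<beta> * t)) \<le> 1"
    proof -
      have shift: "x + t *\<^sub>R v + (- (\<beta> * t)) *\<^sub>R w = x + t *\<^sub>R (v - \<beta> *\<^sub>R w)"
        by (simp add: algebra_simps)
      have "?\<phi> (- (\<beta> * t)) \<le> 1 - \<beta> * t + L * norm (t *\<^sub>R (v - \<beta> *\<^sub>R w)) powr (1 + \<alpha>)"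
        unfolding shift using DF_upper[of x "t *\<^sub>R (v - \<beta> *\<^sub>R w)"] F_eq_1[OF x] v w
        by (simp add: blinfun.diff_right blinfun.scaleR_right mult.commute)
      also have "L * norm (t *\<^sub>R (v - \<beta> *\<^sub>R w)) powr (1 + \<alpha>) = t * (X * t powr \<alpha>)"
        using elim by (simp add: X_def powr_mult powr_add)
      also have "\<dots> \<le> t * \<beta>" using elim by (intro mult_left_mono) auto
      finally show ?thesis by simp
    qed
    moreover have "continuous_on {- (\<beta> * t)..\<beta> * t} ?\<phi>"
      by (rule continuous_on_compose2[OF continuous_on_F]) (auto intro!: continuous_intros)
    ultimately obtain s where "- (\<beta> * t) \<le> s" "s \<le> \<beta> * t" "?\<phi> s = 1"
      using IVT'[of ?\<phi> "- (\<beta> * t)" 1 "\<beta> * t"] \<beta> elim by auto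
    thus ?case by (intro exI[of _ s]) auto
  qed
qed

lemma frontier_curve_off_kernel:
  assumes x: "x \<in> C" and v: "DF x v = 0" "D x v \<noteq> 0"
  obtains y where "(y \<longlongrightarrow> x) (at_right 0)"
    "\<forall>\<^sub>F t in at_right 0. y t \<in> frontier V \<and> norm (y t - x) \<le> t * (norm v + \<bar>D x v\<bar> / 4)
       \<and> 3 / 4 * t * \<bar>D x v\<bar> \<le> \<bar>D x (y t - x)\<bar>"
proof -
  define a where "a = \<bar>D x v\<bar>"
  have a: "0 < a" using v(2) by (simp add: a_def)
  obtain w where w: "DF x w = 1" using exists_blinfun_eq_1[OF DF_nonzero[OF x]] by blast
  hence "w \<noteq> 0" by auto
  define \<beta> where "\<beta> = a / (4 * norm w)"
  have \<beta>: "0 < \<beta>" "\<beta> * norm w = a / 4" using a \<open>w \<noteq> 0\<close> by (simp_all add: \<beta>_def)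
  obtain s where s: "\<forall>\<^sub>F t in at_right 0. \<bar>s t\<bar> \<le> \<beta> * t \<and> F (x + t *\<^sub>R v + s t *\<^sub>R w) = 1"
    using frontier_points_along[OF x v(1) w \<beta>(1)] unfolding eventually_ex by blast
  define y where "y t = x + t *\<^sub>R v + s t *\<^sub>R w" for t
  have "\<forall>\<^sub>F t in at_right 0. y t \<in> frontier V \<and> norm (y t - x) \<le> t * (norm v + a / 4)
      \<and> 3 / 4 * t * a \<le> \<bar>D x (y t - x)\<bar>"
    using s eventually_at_right_less
  proof eventually_elim
    case (elim t)
    have "\<bar>s t\<bar> * norm w \<le> (\<beta> * t) * norm w" using elim by (intro mult_right_mono) auto
    also have "\<dots> = t * (a / 4)" using \<beta>(2) by (simp add: mult_ac)
    finally have sw: "\<bar>s t\<bar> * norm w \<le> t * (a / 4)" .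
    have "\<bar>s t * D x w\<bar> \<le> \<bar>s t\<bar> * norm w"
      using norm_blinfun[of "D x" w] norm_D[OF x] by (simp add: abs_mult mult_left_mono)
    moreover have "D x (y t - x) + - (s t * D x w) = t * D x v"
      by (simp add: y_def blinfun.add_right blinfun.scaleR_right)
    hence "t * a \<le> \<bar>D x (y t - x)\<bar> + \<bar>s t * D x w\<bar>"
      using abs_triangle_ineq[of "D x (y t - x)" "- (s t * D x w)"] elim
        by (simp add: a_def abs_mult)
    moreover have "norm (y t - x) \<le> t * norm v + \<bar>s t\<bar> * norm w"
      using norm_triangle_ineq[of "t *\<^sub>R v" "s t *\<^sub>R w"] elim by (simp add: y_def)
    ultimately show ?case using elim sw by (simp add: y_def frontier_eq algebra_simps)
  qed
  note curve = this
  have "((\<lambda>t. t * (norm v + a / 4)) \<longlongrightarrow> 0) (at_right 0)"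
    by (intro tendsto_mult_left_zero tendsto_ident_at)
  hence "((\<lambda>t. y t - x) \<longlongrightarrow> 0) (at_right 0)"
    by (rule Lim_null_comparison[rotated]) (use curve in \<open>auto elim: eventually_mono\<close>)
  hence "(y \<longlongrightarrow> x) (at_right 0)" by (rule LIM_zero_cancel)
  thus thesis by (rule that) (use curve in \<open>simp add: a_def\<close>)
qed

text \<open>Otherwise the frontier would leave the tangent hyperplane at a linear rate.\<close>
lemma D_eq_0_if_DF_eq_0:
  assumes x: "x \<in> C" and v: "DF x v = 0"
  shows "D x v = 0"
proof (rule ccontr)
  assume "D x v \<noteq> 0"
  then obtain y where lim: "(y \<longlongrightarrow> x) (at_right 0)"
    and curve: "\<forall>\<^sub>F t in at_right 0. y t \<in> frontier V \<and> norm (y t - x) \<le> t * (norm v + \<bar>D x v\<bar> / 4)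
       \<and> 3 / 4 * t * \<bar>D x v\<bar> \<le> \<bar>D x (y t - x)\<bar>"
    using frontier_curve_off_kernel[OF x v] by blast
  define a where "a = \<bar>D x v\<bar>"
  have a: "0 < a" using \<open>D x v \<noteq> 0\<close> by (simp add: a_def)
  define \<rho> where "\<rho> = (3 / 4 * a) / (norm v + a / 4)"
  have "\<forall>\<^sub>F t in at_right 0. y t \<in> frontier V \<and> y t \<noteq> x \<and>
      \<rho> \<le> infdist (y t) (hyperplane_at D x) / norm (y t - x)"
    using curve eventually_at_right_less
  proof eventually_elim
    case (elim t)
    hence lower: "3 / 4 * t * a \<le> \<bar>D x (y t - x)\<bar>"
      and upper: "norm (y t - x) \<le> t * (norm v + a / 4)"
      by (simp_all add: a_def)
    have "0 < t * a" using elim a by simp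
    hence "y t \<noteq> x" using lower by (auto simp: mult.commute)
    hence "\<rho> = (3 / 4 * t * a) / (t * (norm v + a / 4))" using elim by (simp add: \<rho>_def)
    also have "\<dots> \<le> \<bar>D x (y t - x)\<bar> / norm (y t - x)"
      using lower upper \<open>y t \<noteq> x\<close> elim a by (intro frac_le) auto
    also have "\<dots> \<le> infdist (y t) (hyperplane_at D x) / norm (y t - x)"
      by (intro divide_right_mono abs_le_infdist_hyperplane norm_D[OF x]) simp
    finally show ?case using elim \<open>y t \<noteq> x\<close> by simp
  qed
  hence "\<rho> \<le> 0" by (rule ratio_le_0_if_tangent_at[OF tangent[OF x] lim])
  moreover have "0 < \<rho>" using a by (simp add: \<rho>_def add_nonneg_pos)
  ultimately show False by simp
qed

lemma D_eq_scaleR_DF: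
  assumes x: "x \<in> C"
  obtains c where "D x = c *\<^sub>R DF x" "\<bar>c\<bar> * norm (DF x) = 1"
proof -
  obtain w where w: "DF x w = 1" using exists_blinfun_eq_1[OF DF_nonzero[OF x]] by blast
  define c where "c = D x w"
  have "D x h = c * DF x h" for h
  proof -
    have "DF x (h - DF x h *\<^sub>R w) = 0" using w
      by (simp add: blinfun.diff_right blinfun.scaleR_right)
    hence "D x (h - DF x h *\<^sub>R w) = 0" by (rule D_eq_0_if_DF_eq_0[OF x])
    thus ?thesis by (simp add: c_def blinfun.diff_right blinfun.scaleR_right)
  qed
  hence D: "D x = c *\<^sub>R DF x" by (intro blinfun_eqI) (simp add: blinfun.scaleR_left)
  moreover have "\<bar>c\<bar> * norm (DF x) = 1" using arg_cong[OF D, of norm] norm_D[OF x] by simp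
  ultimately show thesis by (rule that)
qed

lemma D_neg_toward_interior:
  assumes x: "x \<in> C" and p: "p \<in> interior V"
  shows "D x (p - x) < 0"
proof -
  obtain r where r: "0 < r" "ball p r \<subseteq> V" using p by (meson mem_interior)
  obtain u where u: "norm u = 1" "norm (D x) / 2 \<le> D x u"
    using exists_unit_half_norm_blinfun[of "D x"] norm_D[OF x] by force
  have "p + (r / 2) *\<^sub>R u \<in> ball p r" using r u by (simp add: dist_norm)
  hence "p + (r / 2) *\<^sub>R u \<in> halfspace_at D x" using r(2) halfspace[OF x] by blast
  hence "D x p + (r / 2) * D x u \<le> D x x"
    by (simp add: halfspace_at_def blinfun.add_right blinfun.scaleR_right)
  moreover have "0 < (r / 2) * D x u" using u r norm_D[OF x] by simp
  ultimately show ?thesis by (simp add: blinfun.diff_right)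
qed

lemma DF_toward_interior_nonneg:
  assumes x: "x \<in> C" and p: "p \<in> interior V" and above: "1 < F p"
  shows "0 \<le> DF x (p - x)"
proof -
  obtain r where r: "0 < r" "ball p r \<subseteq> V" using p by (meson mem_interior)
  have xV: "x \<in> V"
    using x C_subset body frontier_subset_closed by (auto simp: convex_body_def)
  have "- DF x (p - x) \<le> 0"
  proof (rule nonpos_if_le_mult_powr[OF alpha])
    fix s :: real assume s: "0 < s" "s \<le> 1"
    have "x + s *\<^sub>R (p - x) \<in> interior V"
      using body xV r s by (intro convex_shrink_mem_interior) (auto simp: convex_body_def)
    hence "1 < F (x + s *\<^sub>R (p - x))"
      using F_less_1_interior_iff[OF p] F_neq_1_interior above by fastforce
    also have "\<dots> \<le> F x + DF x (s *\<^sub>R (p - x)) + L * norm (s *\<^sub>R (p - x)) powr (1 + \<alpha>)"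
      by (rule DF_upper)
    also have "\<dots> = 1 + s * (DF x (p - x) + (L * norm (p - x) powr (1 + \<alpha>)) * s powr \<alpha>)"
      using F_eq_1[OF x] s
        by (simp add: blinfun.scaleR_right powr_mult powr_add distrib_left mult_ac)
    finally show "- DF x (p - x) \<le> (L * norm (p - x) powr (1 + \<alpha>)) * s powr \<alpha>"
      using s by (simp add: zero_less_mult_iff)
  qed
  thus ?thesis by simp
qed

lemma D_eq_sgn_DF:
  assumes p: "p \<in> interior V" and x: "x \<in> C"
  shows "F p < 1 \<Longrightarrow> D x = sgn (DF x)" and "1 < F p \<Longrightarrow> D x = - sgn (DF x)"
proof -
  obtain c where c: "D x = c *\<^sub>R DF x" "\<bar>c\<bar> * norm (DF x) = 1" using D_eq_scaleR_DF[OF x] by blast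
  have DF: "0 < norm (DF x)" using DF_nonzero[OF x] by simp
  have neg: "c * DF x (p - x) < 0" using D_neg_toward_interior[OF x p] c(1)
    by (simp add: blinfun.scaleR_left)
  show "D x = sgn (DF x)" if "F p < 1"
  proof -
    have "DF x (p - x) < 0" using DF_lower[of x "p - x"] F_eq_1[OF x] that by simp
    hence "0 < c" using neg by (simp add: mult_less_0_iff)
    hence "c = 1 / norm (DF x)" using c(2) DF by (simp add: field_simps)
    thus ?thesis using c(1) by (simp add: sgn_div_norm divide_inverse)
  qed
  show "D x = - sgn (DF x)" if "1 < F p"
  proof -
    have "c < 0" using neg DF_toward_interior_nonneg[OF x p that] by (auto simp: mult_less_0_iff)
    hence "c = - 1 / norm (DF x)" using c(2) DF by (simp add: field_simps)
    thus ?thesis using c(1) by (simp add: sgn_div_norm divide_inverse)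
  qed
qed

lemma gap_le_DF:
  assumes "x \<in> C" "y \<in> C"
  shows "1 / (4 * (4 * L) powr (1 / \<alpha>)) * norm (DF x - DF y) powr (1 + 1 / \<alpha>) \<le> DF y (y - x)"
  using convex_C1_alpha_gap[OF DF_lower DF_upper alpha L, of y x]
    F_eq_1[OF assms(1)] F_eq_1[OF assms(2)]
  by (simp add: blinfun.diff_right)

lemma compatible_if_interior_below:
  assumes p: "p \<in> interior V" and below: "F p < 1"
  shows "\<exists>\<delta>>0. \<forall>x\<in>C. \<forall>y\<in>C. \<delta> * norm (D x - D y) powr (1 + 1 / \<alpha>) \<le> D y (y - x)"
proof (intro exI conjI ballI)
  define q where "q = 1 + 1 / \<alpha>"
  define g where "g = 1 / (4 * (4 * L) powr (1 / \<alpha>))"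
  have g: "0 < g" using L by (simp add: g_def)
  show "0 < g / (M * (2 * M) powr q)" using g M by simp
  fix x y assume x: "x \<in> C" and y: "y \<in> C"
  let ?N = "norm (DF x - DF y)"
  have DFx: "1 / M \<le> norm (DF x)" and DFy: "0 < norm (DF y)" "norm (DF y) \<le> M"
    using norm_DF_bounds C_subset x y DF_nonzero[OF y] by auto
  have "norm (D x - D y) \<le> 2 * ?N / norm (DF x)"
    unfolding D_eq_sgn_DF(1)[OF p x below] D_eq_sgn_DF(1)[OF p y below]
    by (rule norm_sgn_diff_le[OF DF_nonzero[OF x]])
  also have "\<dots> = 2 * ?N * (1 / norm (DF x))" by simp
  also have "\<dots> \<le> 2 * ?N * M"
  proof (rule mult_left_mono)
    have "0 < norm (DF x)" using DF_nonzero[OF x] by simp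
    thus "1 / norm (DF x) \<le> M" using DFx M by (simp add: field_simps)
  qed simp
  finally have "norm (D x - D y) powr q \<le> (2 * M * ?N) powr q"
    using alpha by (intro powr_mono2) (auto simp: q_def mult_ac)
  hence "norm (D x - D y) powr q \<le> (2 * M) powr q * ?N powr q"
    using M by (simp add: powr_mult)
  hence "g / (M * (2 * M) powr q) * norm (D x - D y) powr q \<le> g * ?N powr q / M"
    using g M by (simp add: field_simps)
  also have "\<dots> \<le> g * ?N powr q / norm (DF y)" using DFy g M by (intro divide_left_mono) auto
  also have "\<dots> \<le> DF y (y - x) / norm (DF y)"
    using gap_le_DF[OF x y] DFy by (intro divide_right_mono) (auto simp: g_def q_def)
  also have "\<dots> = D y (y - x)" by (simp add: D_eq_sgn_DF(1)[OF p y below] blinfun_apply_sgn)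
  finally show "g / (M * (2 * M) powr q) * norm (D x - D y) powr (1 + 1 / \<alpha>) \<le> D y (y - x)"
    by (simp add: q_def)
qed

text \<open>Here \<open>D y (y - x) \<ge> 0\<close> forces \<open>DF y (y - x) \<le> 0\<close>, so by the gap estimate \<open>DF\<close> is constant
  on \<open>C\<close>.\<close>
lemma D_eq_if_interior_above:
  assumes p: "p \<in> interior V" and above: "1 < F p" and x: "x \<in> C" and y: "y \<in> C"
  shows "D x = D y" and "0 \<le> D y (y - x)"
proof -
  have "x \<in> V" using x C_subset body frontier_subset_closed by (auto simp: convex_body_def)
  thus nonneg: "0 \<le> D y (y - x)"
    using halfspace[OF y] by (auto simp: halfspace_at_def blinfun.diff_right)
  hence "DF y (y - x) \<le> 0"
    using D_eq_sgn_DF(2)[OF p y above] DF_nonzero[OF y]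
    by (simp add: blinfun.minus_left blinfun_apply_sgn divide_le_0_iff)
  hence "norm (DF x - DF y) powr (1 + 1 / \<alpha>) \<le> 0"
    using gap_le_DF[OF x y] L
      by (smt (verit) divide_pos_pos mult_pos_pos powr_gt_zero zero_less_norm_iff)
  hence "DF x = DF y" by simp
  thus "D x = D y" using D_eq_sgn_DF(2)[OF p _ above] x y by simp
qed

lemma compatible: "\<exists>\<delta>>0. \<forall>x\<in>C. \<forall>y\<in>C. \<delta> * norm (D x - D y) powr (1 + 1 / \<alpha>) \<le> D y (y - x)"
proof -
  obtain p where p: "p \<in> interior V" using body by (auto simp: convex_body_def)
  show ?thesis
  proof (cases "F p < 1")
    case True
    thus ?thesis by (rule compatible_if_interior_below[OF p])
  next
    case False
    hence "1 < F p" using F_neq_1_interior[OF p] by simp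
    hence "1 * norm (D x - D y) powr (1 + 1 / \<alpha>) \<le> D y (y - x)" if "x \<in> C" "y \<in> C" for x y
      using D_eq_if_interior_above[OF p _ that] by simp
    thus ?thesis using zero_less_one by blast
  qed
qed

end

lemma compatible_if_supporting_body:
  fixes C :: "'a::real_normed_vector set" and D :: "'a \<Rightarrow> 'a \<Rightarrow>\<^sub>L real"
  assumes "0 < \<alpha>" and "supporting_body \<alpha> C D V" and "\<forall>x\<in>C. norm (D x) = 1"
  shows "\<exists>\<delta>>0. \<forall>x\<in>C. \<forall>y\<in>C. \<delta> * norm (D x - D y) powr (1 + 1 / \<alpha>) \<le> D y (y - x)"
proof -
  obtain M L F and DF :: "'a \<Rightarrow> 'a \<Rightarrow>\<^sub>L real"
    where "0 < M" "0 < L" "convex_on UNIV F" "\<And>x. (F has_derivative DF x) (at x)"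
      "\<And>x y. norm (DF x - DF y) \<le> L * norm (x - y) powr \<alpha>" "frontier V = F -` {1}"
      "\<And>x. x \<in> frontier V \<Longrightarrow> 1 / M \<le> norm (DF x) \<and> norm (DF x) \<le> M"
    using assms(2) unfolding supporting_body_def C1_alpha_body_def C1_alpha_with_def by metis
  then interpret C1_alpha_supporting \<alpha> L M F DF V C D
    using assms unfolding supporting_body_def C1_alpha_body_def by unfold_locales auto
  show ?thesis by (rule compatible)
qed

lemma supporting_body_if_compatible:
  fixes C :: "'a::real_normed_vector set" and D :: "'a \<Rightarrow> 'a \<Rightarrow>\<^sub>L real"
  assumes "0 < \<alpha>" "\<alpha> \<le> 1" "smoothness_power_type \<alpha> TYPE('a)" "\<forall>x\<in>C. norm (D x) = 1"
    and "0 < \<delta>" "\<forall>x\<in>C. \<forall>y\<in>C. \<delta> * norm (D x - D y) powr (1 + 1 / \<alpha>) \<le> D y (y - x)"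
  shows "\<exists>V. supporting_body \<alpha> C D V \<and> (bounded C \<longrightarrow> bounded V)"
proof (cases "C = {}")
  case True
  obtain V :: "'a set" where "bounded V" "C1_alpha_body \<alpha> V"
    using exists_bounded_C1_alpha_body assms(1-3) by blast
  thus ?thesis using True by (auto simp: supporting_body_def)
next
  case False
  obtain K where "0 < K" "smoothness_bound K \<alpha> TYPE('a)"
    using assms(3) smoothness_power_type_iff by blast
  then interpret compatible_normals \<alpha> \<delta> K C D
    using assms False by unfold_locales auto
  show ?thesis using supporting_body_V bounded_V by blast
qed

theorem theorem3p4:
  fixes \<alpha> :: real and C :: "'a::banach set" and D :: "'a \<Rightarrow> ('a \<Rightarrow>\<^sub>L real)"
  assumes "0 < \<alpha>" and "\<alpha> \<le> 1"
    and "\<forall>x::'a. x \<noteq> 0 \<longrightarrow> (\<lambda>z. norm z) differentiable (at x)"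
    and "smoothness_power_type \<alpha> TYPE('a)"
    and "\<forall>x\<in>C. norm (D x) = 1"
  shows "((\<exists>V. supporting_body \<alpha> C D V) \<longleftrightarrow>
          (\<exists>\<delta>>0. \<forall>x\<in>C. \<forall>y\<in>C. D y (y - x) \<ge> \<delta> * norm (D x - D y) powr (1 + 1 / \<alpha>)))
      \<and> (bounded C \<longrightarrow> (\<exists>V. supporting_body \<alpha> C D V) \<longrightarrow>
          (\<exists>V. bounded V \<and> supporting_body \<alpha> C D V))"
proof -
  let ?compatible = "\<exists>\<delta>>0. \<forall>x\<in>C. \<forall>y\<in>C. \<delta> * norm (D x - D y) powr (1 + 1 / \<alpha>) \<le> D y (y - x)"
  have necessary: "?compatible" if "supporting_body \<alpha> C D V" for V
    using compatible_if_supporting_body[OF assms(1) that assms(5)] .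
  have sufficient: "\<exists>V. supporting_body \<alpha> C D V \<and> (bounded C \<longrightarrow> bounded V)" if ?compatible
    using that supporting_body_if_compatible[OF assms(1,2,4,5)] by blast
  show ?thesis using necessary sufficient by blast
qed

end
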